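(* Let $\{T_i\}_{i=1}^M$ be a quantum $1$-tester on $\mathcal H_2\otimes\mathcal H_1$ with $\sum_iT_i=I_2\otimes\rho$, and let $r$ be the rank of $\rho$. Then $\{T_i\}$ is extremal if and only if the equation $$\sum_{i=1}^M\sum_{n,m}D^{(i)}_{nm}|v^i_n\rangle\langle v^i_m|+\sum_{l=1}^{r^2-1}s_l\,I_2\otimes\sigma_l=0,$$ with each $(D^{(i)}_{nm})_{n,m}$ a hermitian matrix and $s_l\in\mathbb R$, has only the trivial solution.
   Context: A quantum $1$-tester with $M$ outcomes on $\mathcal H_2\otimes\mathcal H_1$ (finite-dimensional) is a family of positive operators $\{T_i\}_{i=1}^M$ with $\sum_iT_i=I_2\otimes\rho$ for some density operator $\rho$ on $\mathcal H_1$; it is extremal if it is an extreme point of the convex set of all such testers with $M$ outcomes. $\{|v^i_n\rangle\}_n$ is an orthonormal set of eigenvectors of $T_i$ spanning $\operatorname{Supp}(T_i)$; $\{\sigma_l\}_{l=1}^{r^2-1}$ is a basis of the traceless hermitian operators on $\mathcal H_1$ with support contained in $\operatorname{Supp}(\rho)$. *)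

theory Defs
  imports Complex_Main "Jordan_Normal_Form.Matrix" "Jordan_Normal_Form.DL_Rank"
begin

text \<open>The space H2 (x) H1 with dim H2 = d2, dim H1 = d1 is realised as C^(d2*d1),
  the basis vector e_a (x) e_b corresponding to index a * d1 + b.\<close>

definition mtrace :: "complex mat \<Rightarrow> complex" where
  "mtrace A = (\<Sum>a<dim_row A. A $$ (a, a))"

definition cinner :: "complex vec \<Rightarrow> complex vec \<Rightarrow> complex" where
  "cinner x y = (\<Sum>a<dim_vec x. cnj (x $ a) * y $ a)"

definition hermitian :: "nat \<Rightarrow> complex mat \<Rightarrow> bool" where
  "hermitian n A \<longleftrightarrow> A \<in> carrier_mat n n \<and>
     (\<forall>a<n. \<forall>b<n. A $$ (a, b) = cnj (A $$ (b, a)))"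

definition positive_op :: "nat \<Rightarrow> complex mat \<Rightarrow> bool" where
  "positive_op n A \<longleftrightarrow> hermitian n A \<and>
     (\<forall>x \<in> carrier_vec n. cinner x (A *\<^sub>v x) \<in> \<real> \<and> 0 \<le> Re (cinner x (A *\<^sub>v x)))"

definition density_op :: "nat \<Rightarrow> complex mat \<Rightarrow> bool" where
  "density_op n \<rho> \<longleftrightarrow> positive_op n \<rho> \<and> mtrace \<rho> = 1"

definition kron :: "complex mat \<Rightarrow> complex mat \<Rightarrow> complex mat" where
  "kron A B = mat (dim_row A * dim_row B) (dim_col A * dim_col B)
     (\<lambda>(i, j). A $$ (i div dim_row B, j div dim_col B) * B $$ (i mod dim_row B, j mod dim_col B))"

text \<open>Support of an operator = its range (for hermitian operators this is the
  orthogonal complement of the kernel).\<close>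
definition supp :: "complex mat \<Rightarrow> complex vec set" where
  "supp A = {A *\<^sub>v x | x. x \<in> carrier_vec (dim_col A)}"

definition cspan :: "nat \<Rightarrow> nat \<Rightarrow> (nat \<Rightarrow> complex vec) \<Rightarrow> complex vec set" where
  "cspan n k v = {vec n (\<lambda>a. \<Sum>j<k. c j * v j $ a) | c. True}"

definition is_tester_with :: "nat \<Rightarrow> nat \<Rightarrow> nat \<Rightarrow> (nat \<Rightarrow> complex mat) \<Rightarrow> complex mat \<Rightarrow> bool" where
  "is_tester_with d2 d1 M T \<rho> \<longleftrightarrow>
     density_op d1 \<rho> \<and> (\<forall>i<M. positive_op (d2 * d1) (T i)) \<and>
     mat (d2 * d1) (d2 * d1) (\<lambda>(a, b). \<Sum>i<M. T i $$ (a, b)) = kron (1\<^sub>m d2) \<rho>"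

definition is_tester :: "nat \<Rightarrow> nat \<Rightarrow> nat \<Rightarrow> (nat \<Rightarrow> complex mat) \<Rightarrow> bool" where
  "is_tester d2 d1 M T \<longleftrightarrow> (\<exists>\<rho>. is_tester_with d2 d1 M T \<rho>)"

text \<open>Extreme point of the convex set of testers with M outcomes
  (families are compared on the outcomes 0..M-1 only).\<close>
definition extremal_tester :: "nat \<Rightarrow> nat \<Rightarrow> nat \<Rightarrow> (nat \<Rightarrow> complex mat) \<Rightarrow> bool" where
  "extremal_tester d2 d1 M T \<longleftrightarrow> is_tester d2 d1 M T \<and>
     (\<forall>T' T'' (t::real). is_tester d2 d1 M T' \<and> is_tester d2 d1 M T'' \<and> 0 < t \<and> t < 1 \<and>
        (\<forall>i<M. T i = complex_of_real t \<cdot>\<^sub>m T' i + complex_of_real (1 - t) \<cdot>\<^sub>m T'' i)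
        \<longrightarrow> (\<forall>i<M. T' i = T'' i))"

end

theory Submission
  imports Defs
begin

text \<open>If \<open>T = t T' + (1 - t) T''\<close> is a proper convex decomposition, each \<open>T'\<^sub>i - T\<^sub>i\<close> is hermitian
  and vanishes on the kernel of \<open>T\<^sub>i\<close>, hence equals \<open>\<Sum>\<^sub>n\<^sub>m D\<^sub>n\<^sub>m |v\<^sup>i\<^sub>n\<rangle>\<langle>v\<^sup>i\<^sub>m|\<close> for a hermitian \<open>D\<close>,
  while the two reduced states differ by a traceless hermitian operator supported in \<open>supp \<rho>\<close>,
  i.e.\ by a real combination of the \<open>\<sigma>\<^sub>l\<close>. Summing over \<open>i\<close> gives a solution of the equation, which
  is trivial only if \<open>T' = T\<close>. Conversely, a nontrivial solution yields operators \<open>\<Delta>\<^sub>i\<close> living on the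
  supports of the \<open>T\<^sub>i\<close> with \<open>\<Sum>\<^sub>i \<Delta>\<^sub>i = I\<^sub>2 \<otimes> \<tau>\<close> and \<open>\<tau>\<close> traceless. On its support \<open>T\<^sub>i\<close> is bounded
  below by its least positive eigenvalue, so \<open>T \<pm> \<epsilon> \<Delta>\<close> are testers for small \<open>\<epsilon> > 0\<close>, and \<open>T\<close> is
  their midpoint.\<close>

section \<open>Coordinate vectors\<close>

text \<open>Vectors are handled as coordinate functions \<^typ>\<open>nat \<Rightarrow> complex\<close>, of which only the
  first \<open>n\<close> entries matter; this avoids carrier bookkeeping in the linear algebra below.\<close>

definition ip :: "nat \<Rightarrow> (nat \<Rightarrow> complex) \<Rightarrow> (nat \<Rightarrow> complex) \<Rightarrow> complex" where
  "ip n f g = (\<Sum>a<n. cnj (f a) * g a)"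

definition mv :: "nat \<Rightarrow> complex mat \<Rightarrow> (nat \<Rightarrow> complex) \<Rightarrow> nat \<Rightarrow> complex" where
  "mv n A f = (\<lambda>a. \<Sum>b<n. A $$ (a, b) * f b)"

definition qf :: "nat \<Rightarrow> complex mat \<Rightarrow> (nat \<Rightarrow> complex) \<Rightarrow> complex" where
  "qf n A f = ip n f (mv n A f)"

lemma ip_cong:
  "(\<And>a. a < n \<Longrightarrow> f a = f' a) \<Longrightarrow> (\<And>a. a < n \<Longrightarrow> g a = g' a) \<Longrightarrow> ip n f g = ip n f' g'"
  unfolding ip_def by (rule sum.cong) auto

lemma ip_add_right: "ip n f (\<lambda>a. g a + h a) = ip n f g + ip n f h"
  unfolding ip_def by (simp add: distrib_left sum.distrib)

lemma ip_diff_right: "ip n f (\<lambda>a. g a - h a) = ip n f g - ip n f h"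
  unfolding ip_def by (simp add: right_diff_distrib sum_subtractf)

lemma ip_scale_right: "ip n f (\<lambda>a. c * g a) = c * ip n f g"
  unfolding ip_def by (simp add: sum_distrib_left mult.assoc mult.left_commute)

lemma ip_sum_right: "ip n f (\<lambda>a. \<Sum>j\<in>J. g j a) = (\<Sum>j\<in>J. ip n f (g j))"
  unfolding ip_def by (simp add: sum_distrib_left sum.swap[of _ J])

lemma ip_swap: "ip n g f = cnj (ip n f g)"
  unfolding ip_def by (simp add: mult.commute)

lemma ip_add_left: "ip n (\<lambda>a. g a + h a) f = ip n g f + ip n h f"
  by (subst ip_swap, simp add: ip_add_right, simp add: ip_swap[of n f])

lemma ip_scale_left: "ip n (\<lambda>a. c * g a) f = cnj c * ip n g f"
  by (subst ip_swap, simp add: ip_scale_right, simp add: ip_swap[of n f])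

lemma ip_sum_left: "ip n (\<lambda>a. \<Sum>j\<in>J. g j a) f = (\<Sum>j\<in>J. ip n (g j) f)"
  by (subst ip_swap, simp add: ip_sum_right, simp add: ip_swap[of n f])

lemma ip_self: "ip n f f = of_real (\<Sum>a<n. (cmod (f a))\<^sup>2)"
  unfolding ip_def of_real_sum by (rule sum.cong, simp, metis complex_norm_square mult.commute)

lemma ip_self_nonneg: "0 \<le> Re (ip n f f)"
  by (simp add: ip_self sum_nonneg)

lemma ip_self_eq_0: assumes "ip n f f = 0" "a < n" shows "f a = 0"
proof -
  have "(\<Sum>a<n. (cmod (f a))\<^sup>2) = 0" using assms(1) ip_self[of n f] of_real_eq_0_iff by metis
  hence "\<forall>a\<in>{..<n}. (cmod (f a))\<^sup>2 = 0" by (subst sum_nonneg_eq_0_iff[symmetric]) auto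
  thus ?thesis using assms(2) by auto
qed

lemma mv_cong: "(\<And>b. b < n \<Longrightarrow> f b = f' b) \<Longrightarrow> mv n A f a = mv n A f' a"
  unfolding mv_def by (rule sum.cong) auto

lemma mv_add: "mv n A (\<lambda>b. g b + h b) a = mv n A g a + mv n A h a"
  unfolding mv_def by (simp add: distrib_left sum.distrib)

lemma mv_diff: "mv n A (\<lambda>b. g b - h b) a = mv n A g a - mv n A h a"
  unfolding mv_def by (simp add: right_diff_distrib sum_subtractf)

lemma mv_scale: "mv n A (\<lambda>b. c * g b) a = c * mv n A g a"
  unfolding mv_def by (simp add: sum_distrib_left mult.assoc mult.left_commute)

lemma mv_sum: "mv n A (\<lambda>b. \<Sum>j\<in>J. g j b) a = (\<Sum>j\<in>J. mv n A (g j) a)"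
  unfolding mv_def by (simp add: sum_distrib_left sum.swap[of _ J])

lemma mv_minus_mat:
  assumes "A \<in> carrier_mat n n" "B \<in> carrier_mat n n" "a < n"
  shows "mv n (A - B) g a = mv n A g a - mv n B g a"
  unfolding mv_def using assms by (simp add: sum_subtractf[symmetric] left_diff_distrib)

lemma qf_eq_0_if_mv_eq_0: "(\<forall>a<n. mv n A g a = 0) \<Longrightarrow> qf n A g = 0"
  unfolding qf_def ip_def by (auto intro!: sum.neutral)

lemma qf_sum_mat:
  assumes "\<And>a b. a < n \<Longrightarrow> b < n \<Longrightarrow> A $$ (a, b) = (\<Sum>i\<in>I. T i $$ (a, b))"
  shows "qf n A f = (\<Sum>i\<in>I. qf n (T i) f)"
proof -
  have "qf n A f = ip n f (\<lambda>a. \<Sum>i\<in>I. mv n (T i) f a)"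
    unfolding qf_def
  proof (intro ip_cong refl)
    fix a assume "a < n"
    hence "mv n A f a = (\<Sum>b<n. \<Sum>i\<in>I. T i $$ (a, b) * f b)"
      unfolding mv_def by (intro sum.cong refl) (simp add: assms sum_distrib_right)
    also have "\<dots> = (\<Sum>i\<in>I. mv n (T i) f a)"
      unfolding mv_def by (rule sum.swap)
    finally show "mv n A f a = (\<Sum>i\<in>I. mv n (T i) f a)" .
  qed
  thus ?thesis by (simp add: ip_sum_right qf_def)
qed

lemma qf_lincomb_mat:
  assumes "\<And>a b. a < n \<Longrightarrow> b < n \<Longrightarrow> A $$ (a, b) = x * B $$ (a, b) + y * C $$ (a, b)"
  shows "qf n A f = x * qf n B f + y * qf n C f"
proof -
  have "qf n A f = ip n f (\<lambda>a. x * mv n B f a + y * mv n C f a)"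
    unfolding qf_def
  proof (intro ip_cong refl)
    fix a assume "a < n"
    hence "mv n A f a = (\<Sum>b<n. x * (B $$ (a, b) * f b) + y * (C $$ (a, b) * f b))"
      unfolding mv_def by (intro sum.cong refl) (simp add: assms algebra_simps)
    thus "mv n A f a = x * mv n B f a + y * mv n C f a"
      unfolding mv_def by (simp add: sum.distrib sum_distrib_left)
  qed
  thus ?thesis by (simp add: ip_add_right ip_scale_right qf_def)
qed

lemma cinner_eq_ip: "x \<in> carrier_vec n \<Longrightarrow> cinner x y = ip n (\<lambda>a. x $ a) (\<lambda>a. y $ a)"
  unfolding cinner_def ip_def by auto

lemma index_mult_mat_vec_eq_mv:
  "A \<in> carrier_mat m n \<Longrightarrow> x \<in> carrier_vec n \<Longrightarrow> a < m \<Longrightarrow> (A *\<^sub>v x) $ a = mv n A (\<lambda>b. x $ b) a"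
  unfolding mv_def by (auto simp: scalar_prod_def mult.commute atLeast0LessThan)

section \<open>Hermitian and positive operators\<close>

lemma hermitian_carrier: "hermitian n A \<Longrightarrow> A \<in> carrier_mat n n"
  unfolding hermitian_def by auto

lemma hermitian_cnj: "hermitian n A \<Longrightarrow> a < n \<Longrightarrow> b < n \<Longrightarrow> cnj (A $$ (b, a)) = A $$ (a, b)"
  unfolding hermitian_def by (metis complex_cnj_cnj)

lemma hermitianI:
  assumes "A \<in> carrier_mat n n" "\<And>a b. a < n \<Longrightarrow> b < n \<Longrightarrow> A $$ (a, b) = cnj (A $$ (b, a))"
  shows "hermitian n A"
  unfolding hermitian_def using assms by blast

lemma hermitian_add_smult:
  assumes "hermitian n A" "hermitian n B"
  shows "hermitian n (A + complex_of_real e \<cdot>\<^sub>m B)"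
proof -
  have "A \<in> carrier_mat n n" "B \<in> carrier_mat n n" using assms hermitian_carrier by auto
  thus ?thesis using hermitian_cnj[OF assms(1)] hermitian_cnj[OF assms(2)]
    by (intro hermitianI) auto
qed

lemma hermitian_minus:
  assumes "hermitian n A" "hermitian n B"
  shows "hermitian n (A - B)"
proof -
  have "A \<in> carrier_mat n n" "B \<in> carrier_mat n n" using assms hermitian_carrier by auto
  thus ?thesis using hermitian_cnj[OF assms(1)] hermitian_cnj[OF assms(2)]
    by (intro hermitianI) auto
qed

lemma hermitian_ip_mv:
  assumes "hermitian n A"
  shows "ip n f (mv n A g) = ip n (mv n A f) g"
proof -
  have "ip n f (mv n A g) = (\<Sum>a<n. \<Sum>b<n. cnj (f a) * (A $$ (a, b) * g b))"
    unfolding ip_def mv_def by (simp only: sum_distrib_left)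
  also have "\<dots> = (\<Sum>b<n. \<Sum>a<n. cnj (f a) * (A $$ (a, b) * g b))"
    by (rule sum.swap)
  also have "\<dots> = (\<Sum>b<n. cnj (\<Sum>a<n. A $$ (b, a) * f a) * g b)"
    by (intro sum.cong refl)
       (auto simp: cnj_sum sum_distrib_right hermitian_cnj[OF assms] intro!: sum.cong)
  also have "\<dots> = ip n (mv n A f) g" unfolding ip_def mv_def by simp
  finally show ?thesis .
qed

lemma hermitian_qf_real: "hermitian n A \<Longrightarrow> qf n A f \<in> \<real>"
  unfolding qf_def
  by (metis Reals_cnj_iff hermitian_ip_mv ip_swap)

lemma cinner_mult_mat_vec_eq_qf:
  assumes "A \<in> carrier_mat n n" "x \<in> carrier_vec n"
  shows "cinner x (A *\<^sub>v x) = qf n A (\<lambda>a. x $ a)"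
  unfolding qf_def cinner_eq_ip[OF assms(2)] using assms
  by (intro ip_cong) (auto simp: index_mult_mat_vec_eq_mv[OF assms(1,2)] simp del: index_mult_mat_vec)

lemma positive_op_iff:
  "positive_op n A \<longleftrightarrow> hermitian n A \<and> (\<forall>f. 0 \<le> Re (qf n A f))"
proof (cases "hermitian n A")
  case True
  have vec: "qf n A f = cinner (vec n f) (A *\<^sub>v vec n f)" for f
  proof -
    have "qf n A f = qf n A (\<lambda>a. vec n f $ a)"
      unfolding qf_def by (intro ip_cong mv_cong) auto
    thus ?thesis using cinner_mult_mat_vec_eq_qf[OF hermitian_carrier[OF True]] by simp
  qed
  have "(\<forall>x \<in> carrier_vec n. cinner x (A *\<^sub>v x) \<in> \<real> \<and> 0 \<le> Re (cinner x (A *\<^sub>v x)))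
      \<longleftrightarrow> (\<forall>f. 0 \<le> Re (qf n A f))"
  proof (intro iffI allI ballI conjI)
    fix f
    assume "\<forall>x \<in> carrier_vec n. cinner x (A *\<^sub>v x) \<in> \<real> \<and> 0 \<le> Re (cinner x (A *\<^sub>v x))"
    hence "0 \<le> Re (cinner (vec n f) (A *\<^sub>v vec n f))" by (meson vec_carrier)
    thus "0 \<le> Re (qf n A f)" by (simp only: vec)
  next
    fix x :: "complex vec"
    assume "\<forall>f. 0 \<le> Re (qf n A f)" and x: "x \<in> carrier_vec n"
    have "cinner x (A *\<^sub>v x) = qf n A (\<lambda>a. x $ a)"
      using cinner_mult_mat_vec_eq_qf[OF hermitian_carrier[OF True] x] .
    thus "cinner x (A *\<^sub>v x) \<in> \<real>" "0 \<le> Re (cinner x (A *\<^sub>v x))"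
      using hermitian_qf_real[OF True] \<open>\<forall>f. 0 \<le> Re (qf n A f)\<close> by simp_all
  qed
  thus ?thesis unfolding positive_op_def using True by simp
qed (simp add: positive_op_def)

lemma qf_add_scaled:
  "qf n A (\<lambda>b. f b + c * y b)
     = qf n A f + c * ip n f (mv n A y) + cnj c * ip n y (mv n A f) + cnj c * c * qf n A y"
proof -
  have "mv n A (\<lambda>b. f b + c * y b) = (\<lambda>a. mv n A f a + c * mv n A y a)"
    by (rule ext) (simp add: mv_add mv_scale)
  thus ?thesis unfolding qf_def
    by (simp add: ip_add_left ip_add_right ip_scale_left ip_scale_right algebra_simps)
qed

lemma positive_qf_eq_0_imp_mv_eq_0:
  assumes pos: "positive_op n A" and f: "qf n A f = 0" and a: "a < n"
  shows "mv n A f a = 0"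
proof -
  define y where "y = mv n A f"
  define g where "g = Re (ip n y y)"
  define h where "h = Re (qf n A y)"
  have herm: "hermitian n A" and nonneg: "\<And>u. 0 \<le> Re (qf n A u)"
    using pos unfolding positive_op_iff by auto
  have "g \<ge> 0" "h \<ge> 0" unfolding g_def h_def using ip_self_nonneg nonneg by auto
  \<comment> \<open>along \<open>f + t y\<close> the form is \<open>2 t g + t\<^sup>2 h\<close>, which is negative for small \<open>t < 0\<close> unless \<open>g = 0\<close>\<close>
  have along: "0 \<le> 2 * t * g + t * t * h" for t :: real
  proof -
    have "qf n A (\<lambda>b. f b + complex_of_real t * y b)
        = 2 * complex_of_real t * ip n y y + complex_of_real t * complex_of_real t * qf n A y"
      unfolding qf_add_scaled f y_def hermitian_ip_mv[OF herm, of f] by simp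
    thus ?thesis using nonneg[of "\<lambda>b. f b + complex_of_real t * y b"] unfolding g_def h_def by simp
  qed
  have "g = 0"
  proof (rule ccontr)
    assume "g \<noteq> 0"
    with \<open>g \<ge> 0\<close> have "g > 0" by simp
    define t where "t = - g / (h + 1)"
    have "t < 0" unfolding t_def using \<open>g > 0\<close> \<open>h \<ge> 0\<close> by (simp add: divide_pos_pos)
    have "- (t * h) = g * (h / (h + 1))" unfolding t_def by simp
    also have "\<dots> \<le> g" using \<open>g > 0\<close> \<open>h \<ge> 0\<close> by (intro mult_left_le) auto
    finally have "t * (2 * g + t * h) < 0" using \<open>g > 0\<close> \<open>t < 0\<close> by (simp add: mult_neg_pos)
    thus False using along[of t] by (simp add: algebra_simps)
  qed
  hence "ip n y y = 0" unfolding g_def by (simp add: ip_self)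
  thus ?thesis using ip_self_eq_0 a unfolding y_def by metis
qed

lemma exists_orthogonal_residual:
  fixes w :: "nat \<Rightarrow> nat \<Rightarrow> complex"
  shows "\<exists>c. \<forall>k<K. ip n (w k) (\<lambda>a. y a - (\<Sum>j<K. c j * w j a)) = 0"
proof (induction K arbitrary: y)
  case 0
  show ?case by simp
next
  case (Suc K)
  obtain a where a: "\<forall>k<K. ip n (w k) (\<lambda>x. w K x - (\<Sum>j<K. a j * w j x)) = 0"
    using Suc.IH by blast
  obtain b where b: "\<forall>k<K. ip n (w k) (\<lambda>x. y x - (\<Sum>j<K. b j * w j x)) = 0"
    using Suc.IH by blast
  define rw where "rw = (\<lambda>x. w K x - (\<Sum>j<K. a j * w j x))"
  define ry where "ry = (\<lambda>x. y x - (\<Sum>j<K. b j * w j x))"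
  define \<alpha> where "\<alpha> = (if ip n rw rw = 0 then 0 else ip n rw ry / ip n rw rw)"
  define c where "c = (\<lambda>j. if j < K then b j - \<alpha> * a j else \<alpha>)"
  have residual: "(\<lambda>x. y x - (\<Sum>j<Suc K. c j * w j x)) = (\<lambda>x. ry x - \<alpha> * rw x)"
    unfolding ry_def rw_def c_def
    by (rule ext) (simp add: algebra_simps sum.distrib sum_subtractf sum_distrib_left)
  have old: "ip n (w k) (\<lambda>x. ry x - \<alpha> * rw x) = 0" if "k < K" for k
    using a b that unfolding ry_def rw_def by (simp add: ip_diff_right ip_scale_right)
  have "ip n rw (\<lambda>x. ry x - \<alpha> * rw x) = 0"
  proof (cases "ip n rw rw = 0")
    case True
    thus ?thesis unfolding ip_def using ip_self_eq_0[OF True] by simp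
  next
    case False
    have "ip n rw (\<lambda>x. ry x - \<alpha> * rw x) = ip n rw ry - \<alpha> * ip n rw rw"
      by (simp add: ip_diff_right ip_scale_right)
    thus ?thesis using False by (simp add: \<alpha>_def)
  qed
  moreover have "ip n (\<lambda>x. \<Sum>j<K. a j * w j x) (\<lambda>x. ry x - \<alpha> * rw x) = 0"
    using old by (simp add: ip_sum_left ip_scale_left)
  moreover have "w K = (\<lambda>x. rw x + (\<Sum>j<K. a j * w j x))" unfolding rw_def by simp
  ultimately have new: "ip n (w K) (\<lambda>x. ry x - \<alpha> * rw x) = 0"
    by (simp add: ip_add_left)
  show ?case
    by (rule exI[of _ c], unfold residual) (use old new in \<open>auto simp: less_Suc_eq\<close>)
qed

lemma hermitian_range_if_orth_kernel:
  assumes herm: "hermitian n H"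
    and orth: "\<And>z. \<forall>a<n. mv n H z a = 0 \<Longrightarrow> ip n z y = 0"
  shows "\<exists>x. \<forall>a<n. y a = mv n H x a"
proof -
  obtain c where c: "\<forall>j<n. ip n (\<lambda>a. H $$ (a, j)) (\<lambda>a. y a - (\<Sum>b<n. c b * H $$ (a, b))) = 0"
    using exists_orthogonal_residual[where w="\<lambda>j a. H $$ (a, j)" and K=n and n=n and y=y] by blast
  define r where "r = (\<lambda>a. y a - mv n H c a)"
  have r_eq: "(\<lambda>a. y a - (\<Sum>b<n. c b * H $$ (a, b))) = r"
    unfolding r_def mv_def by (simp add: mult.commute)
  \<comment> \<open>\<open>r\<close> is orthogonal to the columns of \<open>H\<close>, i.e.\ to the rows of \<open>H = H\<^sup>*\<close>\<close>
  have Hr: "\<forall>a<n. mv n H r a = 0"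
  proof (intro allI impI)
    fix a assume a: "a < n"
    have "mv n H r a = ip n (\<lambda>b. H $$ (b, a)) r"
      unfolding mv_def ip_def by (intro sum.cong refl) (use a hermitian_cnj[OF herm] in auto)
    thus "mv n H r a = 0" using c a r_eq by simp
  qed
  have "ip n r (mv n H c) = ip n (mv n H r) c" by (rule hermitian_ip_mv[OF herm])
  also have "\<dots> = 0" unfolding ip_def using Hr by simp
  finally have "ip n r r = 0" using orth[OF Hr] unfolding r_def by (simp add: ip_diff_right)
  hence "\<forall>a<n. r a = 0" using ip_self_eq_0 by blast
  thus ?thesis unfolding r_def by (intro exI[of _ c]) auto
qed

lemma positive_op_hermitian: "positive_op n A \<Longrightarrow> hermitian n A"
  unfolding positive_op_def by blast

lemma positive_op_kernel_if_Re_qf_eq_0: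
  assumes pos: "positive_op n A" and zero: "Re (qf n A f) = 0"
  shows "\<forall>a<n. mv n A f a = 0"
proof -
  have "qf n A f = complex_of_real (Re (qf n A f))"
    using hermitian_qf_real[OF positive_op_hermitian[OF pos]] by (simp add: of_real_Re)
  thus ?thesis using positive_qf_eq_0_imp_mv_eq_0[OF pos] zero by simp
qed

lemma positive_add_smult_if_dominated:
  assumes pos: "positive_op n T" and herm: "hermitian n A"
    and dom: "\<And>f. \<epsilon> * \<bar>Re (qf n A f)\<bar> \<le> Re (qf n T f)" and e: "\<bar>e\<bar> \<le> \<epsilon>"
  shows "positive_op n (T + complex_of_real e \<cdot>\<^sub>m A)"
  unfolding positive_op_iff
proof (intro conjI allI)
  have herm_T: "hermitian n T" using pos by (rule positive_op_hermitian)
  thus "hermitian n (T + complex_of_real e \<cdot>\<^sub>m A)" using herm by (rule hermitian_add_smult)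
  fix f
  have "qf n (T + complex_of_real e \<cdot>\<^sub>m A) f = 1 * qf n T f + complex_of_real e * qf n A f"
    by (rule qf_lincomb_mat) (use hermitian_carrier[OF herm_T] hermitian_carrier[OF herm] in simp)
  moreover have "- (e * Re (qf n A f)) \<le> \<bar>e\<bar> * \<bar>Re (qf n A f)\<bar>"
    by (simp add: abs_mult[symmetric])
  moreover have "\<bar>e\<bar> * \<bar>Re (qf n A f)\<bar> \<le> \<epsilon> * \<bar>Re (qf n A f)\<bar>"
    using e by (simp add: mult_right_mono)
  ultimately show "0 \<le> Re (qf n (T + complex_of_real e \<cdot>\<^sub>m A) f)"
    using dom[of f] by simp
qed

lemma positive_convex_kernel:
  assumes B: "positive_op n B" and C: "positive_op n C" and t: "0 < t" "t < 1"
    and A: "\<And>a b. a < n \<Longrightarrow> b < n \<Longrightarrow>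
      A $$ (a, b) = complex_of_real t * B $$ (a, b) + complex_of_real (1 - t) * C $$ (a, b)"
    and g: "\<forall>a<n. mv n A g a = 0"
  shows "\<forall>a<n. mv n B g a = 0"
proof -
  have "qf n A g = complex_of_real t * qf n B g + complex_of_real (1 - t) * qf n C g"
    by (rule qf_lincomb_mat) (rule A)
  hence "Re (complex_of_real t * qf n B g + complex_of_real (1 - t) * qf n C g) = 0"
    using qf_eq_0_if_mv_eq_0[OF g] by simp
  hence "0 = t * Re (qf n B g) + (1 - t) * Re (qf n C g)"
    by simp
  moreover have "0 \<le> Re (qf n B g)" "0 \<le> Re (qf n C g)"
    using B C positive_op_iff by blast+
  ultimately have "t * Re (qf n B g) = 0"
    using t by (simp add: add_nonneg_eq_0_iff)
  thus ?thesis using positive_op_kernel_if_Re_qf_eq_0[OF B] t by simp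
qed

lemma hermitian_supp_subset:
  assumes A: "hermitian n A" and B: "hermitian n B"
    and kernel: "\<And>u. \<forall>a<n. mv n A u a = 0 \<Longrightarrow> \<forall>a<n. mv n B u a = 0"
  shows "supp B \<subseteq> supp A"
proof
  have A_carrier: "A \<in> carrier_mat n n" and B_carrier: "B \<in> carrier_mat n n"
    using A B hermitian_carrier by auto
  fix y assume "y \<in> supp B"
  then obtain z where z: "z \<in> carrier_vec n" "y = B *\<^sub>v z"
    unfolding supp_def using B_carrier by auto
  have "\<exists>x. \<forall>a<n. mv n B (($) z) a = mv n A x a"
  proof (rule hermitian_range_if_orth_kernel[OF A])
    fix u assume "\<forall>a<n. mv n A u a = 0"
    hence "\<forall>a<n. mv n B u a = 0" by (rule kernel)
    hence "ip n (mv n B u) (($) z) = 0" unfolding ip_def by simp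
    thus "ip n u (mv n B (($) z)) = 0" by (simp add: hermitian_ip_mv[OF B])
  qed
  then obtain x where x: "\<forall>a<n. mv n B (($) z) a = mv n A x a" by blast
  have "y = A *\<^sub>v vec n x"
  proof (rule eq_vecI)
    fix a assume "a < dim_vec (A *\<^sub>v vec n x)"
    hence a: "a < n" using A_carrier by simp
    have "y $ a = mv n A x a"
      using z index_mult_mat_vec_eq_mv[OF B_carrier z(1) a] x a by simp
    also have "\<dots> = (A *\<^sub>v vec n x) $ a"
      using index_mult_mat_vec_eq_mv[OF A_carrier vec_carrier a, of x] a by (simp add: mv_def)
    finally show "y $ a = (A *\<^sub>v vec n x) $ a" .
  qed (use z A_carrier B_carrier in simp)
  thus "y \<in> supp A" unfolding supp_def using A_carrier by auto
qed

section \<open>Orthonormal families\<close>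

definition outer_sum :: "nat \<Rightarrow> nat \<Rightarrow> (nat \<Rightarrow> complex vec) \<Rightarrow> complex mat \<Rightarrow> complex mat" where
  "outer_sum N k v D = mat N N (\<lambda>(a, b). \<Sum>n<k. \<Sum>m<k. D $$ (n, m) * v n $ a * cnj (v m $ b))"

lemma outer_sum_carrier: "outer_sum N k v D \<in> carrier_mat N N"
  by (simp add: outer_sum_def)

lemma index_outer_sum:
  "a < N \<Longrightarrow> b < N \<Longrightarrow> outer_sum N k v D $$ (a, b) = (\<Sum>n<k. \<Sum>m<k. D $$ (n, m) * v n $ a * cnj (v m $ b))"
  by (simp add: outer_sum_def)

lemma hermitian_outer_sum:
  assumes "hermitian k D"
  shows "hermitian N (outer_sum N k v D)"
proof (rule hermitianI[OF outer_sum_carrier])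
  fix a b assume a: "a < N" and b: "b < N"
  have "cnj (outer_sum N k v D $$ (b, a))
      = (\<Sum>n<k. \<Sum>m<k. D $$ (m, n) * v m $ a * cnj (v n $ b))"
    unfolding index_outer_sum[OF b a]
    by (simp add: cnj_sum hermitian_cnj[OF assms] mult.commute mult.left_commute)
  also have "\<dots> = outer_sum N k v D $$ (a, b)"
    unfolding index_outer_sum[OF a b] by (rule sum.swap)
  finally show "outer_sum N k v D $$ (a, b) = cnj (outer_sum N k v D $$ (b, a))" by simp
qed

lemma mv_outer_sum:
  assumes "a < N"
  shows "mv N (outer_sum N k v D) f a = (\<Sum>n<k. \<Sum>m<k. D $$ (n, m) * ip N (($) (v m)) f * v n $ a)"
proof -
  have "mv N (outer_sum N k v D) f a
      = (\<Sum>b<N. \<Sum>n<k. \<Sum>m<k. D $$ (n, m) * v n $ a * (cnj (v m $ b) * f b))"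
    unfolding mv_def
    by (intro sum.cong refl) (simp add: index_outer_sum assms sum_distrib_right mult.assoc)
  also have "\<dots> = (\<Sum>n<k. \<Sum>b<N. \<Sum>m<k. D $$ (n, m) * v n $ a * (cnj (v m $ b) * f b))"
    by (rule sum.swap)
  also have "\<dots> = (\<Sum>n<k. \<Sum>m<k. \<Sum>b<N. D $$ (n, m) * v n $ a * (cnj (v m $ b) * f b))"
    by (intro sum.cong refl sum.swap)
  also have "\<dots> = (\<Sum>n<k. \<Sum>m<k. D $$ (n, m) * ip N (($) (v m)) f * v n $ a)"
    unfolding ip_def by (simp add: sum_distrib_left ac_simps)
  finally show ?thesis .
qed

lemma qf_outer_sum:
  "qf N (outer_sum N k v D) f
     = (\<Sum>n<k. \<Sum>m<k. D $$ (n, m) * ip N (($) (v m)) f * cnj (ip N (($) (v n)) f))"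
proof -
  have "qf N (outer_sum N k v D) f
      = ip N f (\<lambda>a. \<Sum>n<k. \<Sum>m<k. D $$ (n, m) * ip N (($) (v m)) f * v n $ a)"
    unfolding qf_def by (rule ip_cong) (simp_all add: mv_outer_sum)
  thus ?thesis by (simp add: ip_sum_right ip_scale_right ip_swap[of N f] mult.assoc)
qed

lemma hermitian_compression:
  assumes "hermitian N A"
  shows "hermitian k (mat k k (\<lambda>(n, m). ip N (u n) (mv N A (u m))))"
proof (rule hermitianI)
  fix n m assume "n < k" "m < k"
  have "ip N (u n) (mv N A (u m)) = cnj (ip N (u m) (mv N A (u n)))"
    by (simp add: hermitian_ip_mv[OF assms, of "u n"] ip_swap[of N "mv N A (u n)"])
  thus "mat k k (\<lambda>(n, m). ip N (u n) (mv N A (u m))) $$ (n, m)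
      = cnj (mat k k (\<lambda>(n, m). ip N (u n) (mv N A (u m))) $$ (m, n))"
    using \<open>n < k\<close> \<open>m < k\<close> by simp
qed simp

locale orthonormal_family =
  fixes N k :: nat and v :: "nat \<Rightarrow> complex vec"
  assumes carrier: "\<And>n. n < k \<Longrightarrow> v n \<in> carrier_vec N"
    and orthonormal: "\<And>n m. n < k \<Longrightarrow> m < k \<Longrightarrow> cinner (v n) (v m) = (if n = m then 1 else 0)"
begin

lemma ip_family: "n < k \<Longrightarrow> m < k \<Longrightarrow> ip N (($) (v n)) (($) (v m)) = (if n = m then 1 else 0)"
  using orthonormal carrier cinner_eq_ip by metis

lemma ip_residual:
  assumes "p < k"
  shows "ip N (($) (v p)) (\<lambda>a. f a - (\<Sum>m<k. ip N (($) (v m)) f * v m $ a)) = 0"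
proof -
  have "ip N (($) (v p)) (\<lambda>a. \<Sum>m<k. ip N (($) (v m)) f * v m $ a)
      = (\<Sum>m<k. ip N (($) (v m)) f * ip N (($) (v p)) (($) (v m)))"
    by (simp add: ip_sum_right ip_scale_right)
  also have "\<dots> = (\<Sum>m<k. if m = p then ip N (($) (v m)) f else 0)"
    by (intro sum.cong refl) (simp add: ip_family assms)
  also have "\<dots> = ip N (($) (v p)) f"
    using assms by simp
  finally show ?thesis by (simp add: ip_diff_right)
qed

lemma mv_expansion:
  assumes kill: "\<And>g. \<forall>m<k. ip N (($) (v m)) g = 0 \<Longrightarrow> \<forall>a<N. mv N A g a = 0"
    and a: "a < N"
  shows "mv N A f a = (\<Sum>m<k. ip N (($) (v m)) f * mv N A (($) (v m)) a)"
proof -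
  have "mv N A (\<lambda>a. f a - (\<Sum>m<k. ip N (($) (v m)) f * v m $ a)) a = 0"
    using kill ip_residual a by blast
  thus ?thesis by (simp add: mv_diff mv_sum mv_scale)
qed

lemma ip_mv_outer_sum:
  assumes "p < k" "q < k"
  shows "ip N (($) (v p)) (mv N (outer_sum N k v D) (($) (v q))) = D $$ (p, q)"
proof -
  have "ip N (($) (v p)) (mv N (outer_sum N k v D) (($) (v q)))
      = ip N (($) (v p)) (\<lambda>a. \<Sum>n<k. D $$ (n, q) * v n $ a)"
  proof (rule ip_cong)
    fix a assume "a < N"
    have "mv N (outer_sum N k v D) (($) (v q)) a
        = (\<Sum>n<k. \<Sum>m<k. if m = q then D $$ (n, m) * v n $ a else 0)"
      unfolding mv_outer_sum[OF \<open>a < N\<close>] by (intro sum.cong refl) (simp add: ip_family assms(2))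
    thus "mv N (outer_sum N k v D) (($) (v q)) a = (\<Sum>n<k. D $$ (n, q) * v n $ a)"
      using assms(2) by simp
  qed simp
  also have "\<dots> = (\<Sum>n<k. D $$ (n, q) * ip N (($) (v p)) (($) (v n)))"
    by (simp add: ip_sum_right ip_scale_right)
  also have "\<dots> = (\<Sum>n<k. if n = p then D $$ (n, q) else 0)"
    by (intro sum.cong refl) (simp add: ip_family assms)
  also have "\<dots> = D $$ (p, q)"
    using assms(1) by simp
  finally show ?thesis .
qed

lemma outer_sum_eq_0_imp_eq_0:
  assumes "D \<in> carrier_mat k k" "outer_sum N k v D = 0\<^sub>m N N"
  shows "D = 0\<^sub>m k k"
proof (rule eq_matI)
  fix p q assume "p < dim_row (0\<^sub>m k k)" "q < dim_col (0\<^sub>m k k)"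
  hence "p < k" "q < k" by auto
  thus "D $$ (p, q) = 0\<^sub>m k k $$ (p, q)"
    using ip_mv_outer_sum[of p q D] assms(2) by (simp add: mv_def ip_def)
qed (use assms(1) in auto)

lemma mv_in_span:
  assumes herm: "hermitian N A"
    and kill: "\<And>g. \<forall>m<k. ip N (($) (v m)) g = 0 \<Longrightarrow> \<forall>a<N. mv N A g a = 0"
    and a: "a < N"
  shows "mv N A f a = (\<Sum>n<k. ip N (($) (v n)) (mv N A f) * v n $ a)"
proof -
  define u where "u = mv N A f"
  define w where "w = (\<lambda>a. u a - (\<Sum>n<k. ip N (($) (v n)) u * v n $ a))"
  have w_orth: "\<forall>p<k. ip N (($) (v p)) w = 0" unfolding w_def using ip_residual by blast
  have "ip N w w = ip N w (\<lambda>a. u a - (\<Sum>n<k. ip N (($) (v n)) u * v n $ a))"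
    by (simp only: w_def[symmetric])
  also have "\<dots> = ip N w u - (\<Sum>n<k. ip N (($) (v n)) u * ip N w (($) (v n)))"
    by (simp add: ip_diff_right ip_sum_right ip_scale_right)
  also have "(\<Sum>n<k. ip N (($) (v n)) u * ip N w (($) (v n))) = 0"
    using w_orth by (simp add: ip_swap[of N w])
  also have "ip N w u = ip N (mv N A w) f" unfolding u_def by (rule hermitian_ip_mv[OF herm])
  also have "\<dots> = 0" unfolding ip_def using kill[OF w_orth] by simp
  finally have "w a = 0" using ip_self_eq_0 a by simp
  thus ?thesis unfolding w_def u_def by simp
qed

lemma eq_outer_sum_if_kernel:
  assumes herm: "hermitian N A"
    and kill: "\<And>g. \<forall>m<k. ip N (($) (v m)) g = 0 \<Longrightarrow> \<forall>a<N. mv N A g a = 0"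
  shows "A = outer_sum N k v (mat k k (\<lambda>(n, m). ip N (($) (v n)) (mv N A (($) (v m)))))"
    (is "A = outer_sum N k v ?D")
proof (rule eq_matI)
  fix a b assume "a < dim_row (outer_sum N k v ?D)" "b < dim_col (outer_sum N k v ?D)"
  hence a: "a < N" and b: "b < N" by (simp_all add: outer_sum_def)
  have col: "mv N A (($) (v m)) a = (\<Sum>n<k. ip N (($) (v n)) (mv N A (($) (v m))) * v n $ a)" for m
    by (rule mv_in_span[OF herm kill a])
  define e where "e = (\<lambda>x. if x = b then (1::complex) else 0)"
  have "mv N A e a = (\<Sum>x<N. if x = b then A $$ (a, x) else 0)"
    unfolding mv_def e_def by (intro sum.cong refl) simp
  hence "A $$ (a, b) = mv N A e a" using b by simp
  also have "\<dots> = (\<Sum>m<k. ip N (($) (v m)) e * mv N A (($) (v m)) a)"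
    by (rule mv_expansion[OF kill a])
  also have "\<dots> = (\<Sum>m<k. cnj (v m $ b) * mv N A (($) (v m)) a)"
  proof (intro sum.cong refl)
    fix m
    have "ip N (($) (v m)) e = (\<Sum>x<N. if x = b then cnj (v m $ x) else 0)"
      unfolding ip_def e_def by (intro sum.cong refl) simp
    thus "ip N (($) (v m)) e * mv N A (($) (v m)) a = cnj (v m $ b) * mv N A (($) (v m)) a"
      using b by simp
  qed
  also have "\<dots> = outer_sum N k v ?D $$ (a, b)"
    unfolding index_outer_sum[OF a b] col
    by (subst sum.swap) (simp add: sum_distrib_left ac_simps)
  finally show "A $$ (a, b) = outer_sum N k v ?D $$ (a, b)" .
qed (use herm hermitian_carrier in \<open>auto simp: outer_sum_def\<close>)

end

lemma prod_le_sum_squares: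
  fixes c :: "nat \<Rightarrow> real"
  assumes "n < k" "m < k"
  shows "c n * c m \<le> (\<Sum>j<k. (c j)\<^sup>2)"
proof -
  have "(c n)\<^sup>2 \<le> (\<Sum>j<k. (c j)\<^sup>2)" "(c m)\<^sup>2 \<le> (\<Sum>j<k. (c j)\<^sup>2)"
    using assms by (auto intro!: member_le_sum)
  moreover have "2 * (c n * c m) \<le> (c n)\<^sup>2 + (c m)\<^sup>2"
    using sum_squares_bound[of "c n" "c m"] by (simp add: power2_eq_square)
  ultimately show ?thesis by linarith
qed

locale support_eigenbasis = orthonormal_family +
  fixes T :: "complex mat"
  assumes positive: "positive_op N T"
    and eigen: "\<And>n. n < k \<Longrightarrow> \<exists>ev. T *\<^sub>v v n = ev \<cdot>\<^sub>v v n"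
    and span: "cspan N k v = supp T"
begin

lemma T_hermitian: "hermitian N T"
  using positive positive_op_iff by blast

lemma T_carrier: "T \<in> carrier_mat N N"
  using T_hermitian by (rule hermitian_carrier)

lemma mv_in_cspan: "\<exists>c. \<forall>a<N. mv N T f a = (\<Sum>j<k. c j * v j $ a)"
proof -
  have "T *\<^sub>v vec N f \<in> cspan N k v"
    unfolding span supp_def using T_carrier by auto
  then obtain c where c: "T *\<^sub>v vec N f = vec N (\<lambda>a. \<Sum>j<k. c j * v j $ a)"
    unfolding cspan_def by auto
  have "mv N T f a = (T *\<^sub>v vec N f) $ a" if "a < N" for a
    using index_mult_mat_vec_eq_mv[OF T_carrier vec_carrier that, of f] by (simp add: mv_def)
  with c show ?thesis by auto
qed

lemma kernel_if_orth:
  assumes orth: "\<forall>m<k. ip N (($) (v m)) g = 0"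
  shows "\<forall>a<N. mv N T g a = 0"
proof -
  define y where "y = mv N T g"
  obtain c where c: "\<forall>a<N. mv N T y a = (\<Sum>j<k. c j * v j $ a)" using mv_in_cspan by blast
  have "ip N y y = ip N g (mv N T y)" unfolding y_def by (rule hermitian_ip_mv[OF T_hermitian, symmetric])
  also have "\<dots> = ip N g (\<lambda>a. \<Sum>j<k. c j * v j $ a)" by (rule ip_cong) (use c in auto)
  also have "\<dots> = 0" using orth by (simp add: ip_sum_right ip_scale_right ip_swap[of N g])
  finally show ?thesis unfolding y_def using ip_self_eq_0 by blast
qed

definition eigval :: "nat \<Rightarrow> real" where
  "eigval n = Re (qf N T (($) (v n)))"

lemma mv_eigvec:
  assumes n: "n < k" and a: "a < N"
  shows "mv N T (($) (v n)) a = complex_of_real (eigval n) * v n $ a"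
proof -
  obtain ev where ev: "T *\<^sub>v v n = ev \<cdot>\<^sub>v v n" using eigen[OF n] by blast
  have mv_ev: "mv N T (($) (v n)) b = ev * v n $ b" if "b < N" for b
    using index_mult_mat_vec_eq_mv[OF T_carrier carrier[OF n] that] ev carrier[OF n] that by simp
  have "qf N T (($) (v n)) = ip N (($) (v n)) (\<lambda>b. ev * v n $ b)"
    unfolding qf_def by (rule ip_cong) (simp_all add: mv_ev)
  also have "\<dots> = ev" using ip_family[OF n n] by (simp add: ip_scale_right)
  finally have "ev = complex_of_real (eigval n)"
    unfolding eigval_def using hermitian_qf_real[OF T_hermitian] by (metis Reals_cases Re_complex_of_real)
  thus ?thesis using mv_ev[OF a] by simp
qed

lemma eigval_pos:
  assumes n: "n < k"
  shows "eigval n > 0"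
proof -
  have "eigval n \<ge> 0" unfolding eigval_def using positive positive_op_iff by blast
  moreover have "eigval n \<noteq> 0"
  proof
    assume "eigval n = 0"
    hence T_vn: "\<forall>a<N. mv N T (($) (v n)) a = 0" using mv_eigvec[OF n] by simp
    have "(\<Sum>j<k. (if j = n then 1 else 0) * v j $ a) = v n $ a" for a
    proof -
      have "(\<Sum>j<k. (if j = n then 1 else 0) * v j $ a) = (\<Sum>j<k. if j = n then v j $ a else 0)"
        by (intro sum.cong) auto
      thus ?thesis using n by simp
    qed
    hence "v n \<in> cspan N k v"
      unfolding cspan_def using carrier[OF n]
      by (intro CollectI exI[of _ "\<lambda>j. if j = n then 1 else 0"]) auto
    then obtain x where x: "x \<in> carrier_vec N" "v n = T *\<^sub>v x"
      unfolding span supp_def using T_carrier by auto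
    have "ip N (($) (v n)) (($) (v n)) = ip N (mv N T (($) x)) (($) (v n))"
      by (rule ip_cong) (simp_all add: x index_mult_mat_vec_eq_mv[OF T_carrier x(1)])
    also have "\<dots> = ip N (($) x) (mv N T (($) (v n)))"
      by (rule hermitian_ip_mv[OF T_hermitian, symmetric])
    also have "\<dots> = 0" unfolding ip_def using T_vn by simp
    finally show False using ip_family[OF n n] by simp
  qed
  ultimately show ?thesis by simp
qed

lemma qf_eigen_expansion:
  "Re (qf N T f) = (\<Sum>m<k. eigval m * (cmod (ip N (($) (v m)) f))\<^sup>2)"
proof -
  have "qf N T f = ip N f (\<lambda>a. \<Sum>m<k. ip N (($) (v m)) f * (complex_of_real (eigval m) * v m $ a))"
    unfolding qf_def
  proof (rule ip_cong)
    fix a assume a: "a < N"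
    show "mv N T f a = (\<Sum>m<k. ip N (($) (v m)) f * (complex_of_real (eigval m) * v m $ a))"
      by (subst mv_expansion[OF kernel_if_orth a]) (simp_all add: mv_eigvec a)
  qed simp
  also have "\<dots> = (\<Sum>m<k. ip N (($) (v m)) f * (complex_of_real (eigval m) * cnj (ip N (($) (v m)) f)))"
    by (simp add: ip_sum_right ip_scale_right ip_swap[of N f])
  also have "\<dots> = (\<Sum>m<k. complex_of_real (eigval m * (cmod (ip N (($) (v m)) f))\<^sup>2))"
    by (intro sum.cong refl) (simp only: of_real_mult complex_norm_square ac_simps)
  finally show ?thesis by (simp add: Re_sum)
qed

text \<open>The least eigenvalue bounds \<open>T\<close> from below on the span of the family, the entries of \<open>D\<close>
  bound the perturbation from above.\<close>

lemma outer_sum_dominated: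
  "\<exists>\<epsilon>>0. \<forall>f. \<epsilon> * \<bar>Re (qf N (outer_sum N k v D) f)\<bar> \<le> Re (qf N T f)"
proof -
  define lmin where "lmin = Min (insert 1 (eigval ` {..<k}))"
  have "lmin > 0" unfolding lmin_def using eigval_pos by (subst Min_gr_iff) auto
  have lmin_le: "lmin \<le> eigval n" if "n < k" for n unfolding lmin_def using that by (intro Min_le) auto
  define B where "B = (\<Sum>n<k. \<Sum>m<k. cmod (D $$ (n, m)))"
  have "B \<ge> 0" unfolding B_def by (intro sum_nonneg) auto
  show ?thesis
  proof (intro exI[of _ "lmin / (B + 1)"] conjI allI)
    show "lmin / (B + 1) > 0" using \<open>lmin > 0\<close> \<open>B \<ge> 0\<close> by simp
    fix f
    define c where "c = (\<lambda>n. cmod (ip N (($) (v n)) f))"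
    define S where "S = (\<Sum>j<k. (c j)\<^sup>2)"
    have "S \<ge> 0" unfolding S_def by (intro sum_nonneg) auto
    have "lmin * S \<le> Re (qf N T f)"
      unfolding qf_eigen_expansion S_def sum_distrib_left c_def
      by (intro sum_mono mult_right_mono) (auto simp: lmin_le)
    moreover have "\<bar>Re (qf N (outer_sum N k v D) f)\<bar> \<le> B * S"
    proof -
      have "\<bar>Re (qf N (outer_sum N k v D) f)\<bar> \<le> cmod (qf N (outer_sum N k v D) f)"
        by (rule abs_Re_le_cmod)
      also have "\<dots> \<le> (\<Sum>n<k. \<Sum>m<k. cmod (D $$ (n, m) * ip N (($) (v m)) f * cnj (ip N (($) (v n)) f)))"
        unfolding qf_outer_sum by (rule order_trans[OF norm_sum sum_mono]) (rule norm_sum)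
      also have "\<dots> = (\<Sum>n<k. \<Sum>m<k. cmod (D $$ (n, m)) * (c m * c n))"
        unfolding c_def by (simp add: norm_mult mult.assoc)
      also have "\<dots> \<le> (\<Sum>n<k. \<Sum>m<k. cmod (D $$ (n, m)) * S)"
        unfolding S_def by (intro sum_mono mult_left_mono prod_le_sum_squares) auto
      finally show ?thesis unfolding B_def by (simp add: sum_distrib_right)
    qed
    ultimately show "lmin / (B + 1) * \<bar>Re (qf N (outer_sum N k v D) f)\<bar> \<le> Re (qf N T f)"
    proof -
      assume T_ge: "lmin * S \<le> Re (qf N T f)" and A_le: "\<bar>Re (qf N (outer_sum N k v D) f)\<bar> \<le> B * S"
      have "lmin / (B + 1) * \<bar>Re (qf N (outer_sum N k v D) f)\<bar> \<le> lmin / (B + 1) * (B * S)"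
        using A_le \<open>lmin > 0\<close> \<open>B \<ge> 0\<close> by (intro mult_left_mono) auto
      also have "\<dots> = lmin * S * (B / (B + 1))" using \<open>B \<ge> 0\<close> by (simp add: field_simps)
      also have "\<dots> \<le> lmin * S" using \<open>lmin > 0\<close> \<open>S \<ge> 0\<close> \<open>B \<ge> 0\<close> by (intro mult_left_le) auto
      finally show ?thesis using T_ge by simp
    qed
  qed
qed

lemma eq_outer_sum_if_kernel_subset:
  assumes herm: "hermitian N A"
    and kernel: "\<And>g. \<forall>a<N. mv N T g a = 0 \<Longrightarrow> \<forall>a<N. mv N A g a = 0"
  shows "A = outer_sum N k v (mat k k (\<lambda>(n, m). ip N (($) (v n)) (mv N A (($) (v m)))))"
  using eq_outer_sum_if_kernel[OF herm] kernel kernel_if_orth by blast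

end

lemma ex_pos_uniform:
  fixes P :: "nat \<Rightarrow> real \<Rightarrow> bool"
  assumes ex: "\<And>i. i < M \<Longrightarrow> \<exists>\<epsilon>>0. P i \<epsilon>"
    and mono: "\<And>i \<epsilon> \<epsilon>'. P i \<epsilon> \<Longrightarrow> \<epsilon>' \<le> \<epsilon> \<Longrightarrow> P i \<epsilon>'"
  shows "\<exists>\<epsilon>>0. \<forall>i<M. P i \<epsilon>"
proof -
  obtain E where E: "\<And>i. i < M \<Longrightarrow> E i > 0 \<and> P i (E i)" using ex by metis
  define \<epsilon> where "\<epsilon> = Min (insert 1 (E ` {..<M}))"
  have "\<epsilon> > 0" unfolding \<epsilon>_def using E by (subst Min_gr_iff) auto
  moreover have "\<epsilon> \<le> E i" if "i < M" for i unfolding \<epsilon>_def using that by (intro Min_le) auto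
  ultimately show ?thesis using E mono by blast
qed

lemma outer_sums_uniformly_dominated:
  fixes M :: nat
  assumes basis: "\<And>i. i < M \<Longrightarrow> support_eigenbasis N (k i) (v i) (T i)"
  shows "\<exists>\<epsilon>>0. \<forall>i<M. \<forall>f. \<epsilon> * \<bar>Re (qf N (outer_sum N (k i) (v i) (D i)) f)\<bar> \<le> Re (qf N (T i) f)"
proof (rule ex_pos_uniform[where P="\<lambda>i \<epsilon>. \<forall>f. \<epsilon> * \<bar>Re (qf N (outer_sum N (k i) (v i) (D i)) f)\<bar> \<le> Re (qf N (T i) f)"])
  fix i assume "i < M"
  show "\<exists>\<epsilon>>0. \<forall>f. \<epsilon> * \<bar>Re (qf N (outer_sum N (k i) (v i) (D i)) f)\<bar> \<le> Re (qf N (T i) f)"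
    by (rule support_eigenbasis.outer_sum_dominated[OF basis[OF \<open>i < M\<close>]])
next
  fix i and \<epsilon> \<epsilon>' :: real
  assume dom: "\<forall>f. \<epsilon> * \<bar>Re (qf N (outer_sum N (k i) (v i) (D i)) f)\<bar> \<le> Re (qf N (T i) f)"
    and "\<epsilon>' \<le> \<epsilon>"
  show "\<forall>f. \<epsilon>' * \<bar>Re (qf N (outer_sum N (k i) (v i) (D i)) f)\<bar> \<le> Re (qf N (T i) f)"
    using dom mult_right_mono[OF \<open>\<epsilon>' \<le> \<epsilon>\<close> abs_ge_zero] order_trans by blast
qed

section \<open>Operators on \<open>H\<^sub>2 \<otimes> H\<^sub>1\<close>\<close>

lemma kron_one_carrier: "A \<in> carrier_mat d1 d1 \<Longrightarrow> kron (1\<^sub>m d2) A \<in> carrier_mat (d2 * d1) (d2 * d1)"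
  unfolding kron_def by auto

lemma index_kron_one:
  assumes "A \<in> carrier_mat d1 d1" "a < d2 * d1" "b < d2 * d1"
  shows "kron (1\<^sub>m d2) A $$ (a, b) = (if a div d1 = b div d1 then A $$ (a mod d1, b mod d1) else 0)"
proof -
  have "a div d1 < d2" "b div d1 < d2" using assms(2,3)
    by (metis less_mult_imp_div_less mult.commute)+
  thus ?thesis unfolding kron_def using assms by auto
qed

lemma index_kron_one_first_block:
  assumes "A \<in> carrier_mat d1 d1" "0 < d2" "a < d1" "b < d1"
  shows "kron (1\<^sub>m d2) A $$ (a, b) = A $$ (a, b)"
proof -
  have "d1 \<le> d2 * d1" using assms(2) by simp
  hence "a < d2 * d1" "b < d2 * d1" using assms(3,4) by linarith+
  thus ?thesis using index_kron_one[OF assms(1)] assms(3,4) by simp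
qed

lemma index_kron_one_add_smult:
  assumes "A \<in> carrier_mat d1 d1" "B \<in> carrier_mat d1 d1" "a < d2 * d1" "b < d2 * d1"
  shows "kron (1\<^sub>m d2) (A + c \<cdot>\<^sub>m B) $$ (a, b) = kron (1\<^sub>m d2) A $$ (a, b) + c * kron (1\<^sub>m d2) B $$ (a, b)"
proof -
  have "0 < d1" using assms(3) by (cases d1) auto
  thus ?thesis using assms by (simp add: index_kron_one[OF _ assms(3,4)])
qed

lemma index_kron_one_minus:
  assumes "A \<in> carrier_mat d1 d1" "B \<in> carrier_mat d1 d1" "a < d2 * d1" "b < d2 * d1"
  shows "kron (1\<^sub>m d2) (A - B) $$ (a, b) = kron (1\<^sub>m d2) A $$ (a, b) - kron (1\<^sub>m d2) B $$ (a, b)"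
proof -
  have "0 < d1" using assms(3) by (cases d1) auto
  moreover have "A - B \<in> carrier_mat d1 d1" using assms(2) by (rule minus_carrier_mat)
  ultimately show ?thesis using assms by (simp add: index_kron_one[OF _ assms(3,4)])
qed

lemma eq_0_if_index_kron_one_eq_0:
  assumes A: "A \<in> carrier_mat d1 d1" and d2: "0 < d2"
    and zero: "\<And>a b. a < d2 * d1 \<Longrightarrow> b < d2 * d1 \<Longrightarrow> kron (1\<^sub>m d2) A $$ (a, b) = 0"
  shows "A = 0\<^sub>m d1 d1"
proof (rule eq_matI)
  fix a b assume "a < dim_row (0\<^sub>m d1 d1)" "b < dim_col (0\<^sub>m d1 d1)"
  hence ab: "a < d1" "b < d1" by simp_all
  moreover have "a < d2 * d1" "b < d2 * d1" using ab d2 by (auto intro: less_le_trans)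
  ultimately show "A $$ (a, b) = 0\<^sub>m d1 d1 $$ (a, b)"
    using zero index_kron_one_first_block[OF A d2 ab] by simp
qed (use A in auto)

text \<open>The vector \<open>e\<^sub>0 \<otimes> u\<close> of \<open>H\<^sub>2 \<otimes> H\<^sub>1\<close>.\<close>

definition first_block :: "nat \<Rightarrow> (nat \<Rightarrow> complex) \<Rightarrow> nat \<Rightarrow> complex" where
  "first_block d1 u = (\<lambda>a. if a < d1 then u a else 0)"

lemma first_block_apply: "first_block d1 u a = (if a < d1 then u a else 0)"
  by (simp add: first_block_def)

lemma sum_first_block:
  fixes g :: "nat \<Rightarrow> complex"
  assumes "d1 \<le> N"
  shows "(\<Sum>a<N. if a < d1 then g a else 0) = (\<Sum>a<d1. g a)"
proof -
  have "(\<Sum>a<N. if a < d1 then g a else 0) = (\<Sum>a\<in>{..<N} \<inter> {a. a < d1}. g a)"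
    by (simp add: sum.inter_restrict)
  also have "{..<N} \<inter> {a. a < d1} = {..<d1}" using assms by auto
  finally show ?thesis .
qed

lemma qf_kron_one_first_block:
  assumes d2: "0 < d2" and A: "A \<in> carrier_mat d1 d1"
  shows "qf (d2 * d1) (kron (1\<^sub>m d2) A) (first_block d1 u) = qf d1 A u"
proof -
  have le: "d1 \<le> d2 * d1" using d2 by simp
  have mv: "mv (d2 * d1) (kron (1\<^sub>m d2) A) (first_block d1 u) a = mv d1 A u a" if a: "a < d1" for a
  proof -
    have "mv (d2 * d1) (kron (1\<^sub>m d2) A) (first_block d1 u) a
        = (\<Sum>b<d2 * d1. if b < d1 then kron (1\<^sub>m d2) A $$ (a, b) * u b else 0)"
      unfolding mv_def by (rule sum.cong) (auto simp: first_block_apply)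
    also have "\<dots> = mv d1 A u a"
      unfolding sum_first_block[OF le] mv_def
      by (rule sum.cong[OF refl]) (use a d2 in \<open>auto simp: index_kron_one_first_block[OF A]\<close>)
    finally show ?thesis .
  qed
  have "qf (d2 * d1) (kron (1\<^sub>m d2) A) (first_block d1 u)
      = (\<Sum>a<d2 * d1. if a < d1 then cnj (u a) * mv d1 A u a else 0)"
    unfolding qf_def ip_def by (rule sum.cong) (auto simp: first_block_apply mv)
  also have "\<dots> = qf d1 A u" unfolding qf_def ip_def by (rule sum_first_block[OF le])
  finally show ?thesis .
qed

definition real_lincomb :: "nat \<Rightarrow> nat \<Rightarrow> (nat \<Rightarrow> real) \<Rightarrow> (nat \<Rightarrow> complex mat) \<Rightarrow> complex mat" where
  "real_lincomb d L c \<sigma> = mat d d (\<lambda>(a, b). \<Sum>l<L. complex_of_real (c l) * \<sigma> l $$ (a, b))"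

lemma real_lincomb_carrier: "real_lincomb d L c \<sigma> \<in> carrier_mat d d"
  by (simp add: real_lincomb_def)

lemma index_real_lincomb:
  "a < d \<Longrightarrow> b < d \<Longrightarrow> real_lincomb d L c \<sigma> $$ (a, b) = (\<Sum>l<L. complex_of_real (c l) * \<sigma> l $$ (a, b))"
  by (simp add: real_lincomb_def)

lemma hermitian_real_lincomb:
  assumes "\<And>l. l < L \<Longrightarrow> hermitian d (\<sigma> l)"
  shows "hermitian d (real_lincomb d L c \<sigma>)"
  by (rule hermitianI[OF real_lincomb_carrier])
     (auto simp: index_real_lincomb cnj_sum hermitian_cnj[OF assms] intro!: sum.cong)

lemma mtrace_real_lincomb:
  assumes "\<And>l. l < L \<Longrightarrow> \<sigma> l \<in> carrier_mat d d" "\<And>l. l < L \<Longrightarrow> mtrace (\<sigma> l) = 0"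
  shows "mtrace (real_lincomb d L c \<sigma>) = 0"
proof -
  have "mtrace (real_lincomb d L c \<sigma>) = (\<Sum>a<d. \<Sum>l<L. complex_of_real (c l) * \<sigma> l $$ (a, a))"
    unfolding mtrace_def by (simp add: index_real_lincomb real_lincomb_carrier[THEN carrier_matD(1)])
  also have "\<dots> = (\<Sum>l<L. \<Sum>a<d. complex_of_real (c l) * \<sigma> l $$ (a, a))"
    by (rule sum.swap)
  also have "\<dots> = (\<Sum>l<L. complex_of_real (c l) * mtrace (\<sigma> l))"
    unfolding mtrace_def using assms(1) by (auto simp: sum_distrib_left intro!: sum.cong)
  finally show ?thesis using assms(2) by simp
qed

lemma index_kron_one_real_lincomb:
  assumes "\<And>l. l < L \<Longrightarrow> \<sigma> l \<in> carrier_mat d1 d1" "a < d2 * d1" "b < d2 * d1"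
  shows "kron (1\<^sub>m d2) (real_lincomb d1 L c \<sigma>) $$ (a, b)
    = (\<Sum>l<L. complex_of_real (c l) * kron (1\<^sub>m d2) (\<sigma> l) $$ (a, b))"
proof -
  have "0 < d1" using assms(2) by (cases d1) auto
  thus ?thesis
    using assms index_kron_one[OF real_lincomb_carrier assms(2,3)] index_kron_one[OF assms(1) assms(2,3)]
    by (auto simp: index_real_lincomb intro!: sum.cong)
qed

lemma mtrace_add_smult:
  assumes "A \<in> carrier_mat d d" "B \<in> carrier_mat d d"
  shows "mtrace (A + complex_of_real e \<cdot>\<^sub>m B) = mtrace A + complex_of_real e * mtrace B"
  unfolding mtrace_def using assms by (simp add: sum.distrib sum_distrib_left)

lemma mtrace_minus:
  assumes "A \<in> carrier_mat d d" "B \<in> carrier_mat d d"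
  shows "mtrace (A - B) = mtrace A - mtrace B"
  unfolding mtrace_def using assms by (simp add: sum_subtractf)

section \<open>Testers\<close>

lemma tester_density: "is_tester_with d2 d1 M T \<rho> \<Longrightarrow> density_op d1 \<rho>"
  unfolding is_tester_with_def by blast

lemma tester_positive: "is_tester_with d2 d1 M T \<rho> \<Longrightarrow> i < M \<Longrightarrow> positive_op (d2 * d1) (T i)"
  unfolding is_tester_with_def by blast

lemma tester_carrier: "is_tester_with d2 d1 M T \<rho> \<Longrightarrow> i < M \<Longrightarrow> T i \<in> carrier_mat (d2 * d1) (d2 * d1)"
  using tester_positive positive_op_hermitian hermitian_carrier by blast

lemma tester_density_hermitian: "is_tester_with d2 d1 M T \<rho> \<Longrightarrow> hermitian d1 \<rho>"
  using tester_density unfolding density_op_def by (blast dest: positive_op_hermitian)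

lemma tester_sum:
  assumes "is_tester_with d2 d1 M T \<rho>" "a < d2 * d1" "b < d2 * d1"
  shows "(\<Sum>i<M. T i $$ (a, b)) = kron (1\<^sub>m d2) \<rho> $$ (a, b)"
proof -
  have "mat (d2 * d1) (d2 * d1) (\<lambda>(a, b). \<Sum>i<M. T i $$ (a, b)) $$ (a, b) = kron (1\<^sub>m d2) \<rho> $$ (a, b)"
    using assms(1) unfolding is_tester_with_def by simp
  thus ?thesis using assms(2,3) by simp
qed

lemma qf_eq_sum_first_block:
  assumes d2: "0 < d2" and \<rho>: "\<rho> \<in> carrier_mat d1 d1"
    and sum: "\<And>a b. a < d2 * d1 \<Longrightarrow> b < d2 * d1 \<Longrightarrow> (\<Sum>i\<in>I. T i $$ (a, b)) = kron (1\<^sub>m d2) \<rho> $$ (a, b)"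
  shows "qf d1 \<rho> u = (\<Sum>i\<in>I. qf (d2 * d1) (T i) (first_block d1 u))"
  using qf_kron_one_first_block[OF d2 \<rho>, of u] qf_sum_mat[where n="d2 * d1" and A="kron (1\<^sub>m d2) \<rho>" and I=I and T=T] sum
  by simp

lemma is_tester_withI:
  assumes d2: "0 < d2" and herm: "hermitian d1 \<rho>" and trace: "mtrace \<rho> = 1"
    and pos: "\<And>i. i < M \<Longrightarrow> positive_op (d2 * d1) (T i)"
    and sum: "\<And>a b. a < d2 * d1 \<Longrightarrow> b < d2 * d1 \<Longrightarrow> (\<Sum>i<M. T i $$ (a, b)) = kron (1\<^sub>m d2) \<rho> $$ (a, b)"
  shows "is_tester_with d2 d1 M T \<rho>"
proof -
  have carrier: "\<rho> \<in> carrier_mat d1 d1" using herm by (rule hermitian_carrier)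
  have "0 \<le> Re (qf d1 \<rho> u)" for u
  proof -
    have "qf d1 \<rho> u = (\<Sum>i<M. qf (d2 * d1) (T i) (first_block d1 u))"
      by (rule qf_eq_sum_first_block[OF d2 carrier sum])
    thus ?thesis using pos positive_op_iff by (auto intro!: sum_nonneg)
  qed
  hence "density_op d1 \<rho>" unfolding density_op_def positive_op_iff using herm trace by blast
  moreover have "mat (d2 * d1) (d2 * d1) (\<lambda>(a, b). \<Sum>i<M. T i $$ (a, b)) = kron (1\<^sub>m d2) \<rho>"
    by (rule eq_matI) (use kron_one_carrier[OF carrier, of d2] sum in auto)
  ultimately show ?thesis unfolding is_tester_with_def using pos by blast
qed

lemma tester_perturbation:
  assumes d2: "0 < d2" and tester: "is_tester_with d2 d1 M T \<rho>"
    and \<Delta>: "\<And>i. i < M \<Longrightarrow> \<Delta> i \<in> carrier_mat (d2 * d1) (d2 * d1)"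
    and \<tau>: "hermitian d1 \<tau>" "mtrace \<tau> = 0"
    and sum: "\<And>a b. a < d2 * d1 \<Longrightarrow> b < d2 * d1 \<Longrightarrow> (\<Sum>i<M. \<Delta> i $$ (a, b)) = kron (1\<^sub>m d2) \<tau> $$ (a, b)"
    and pos: "\<And>i. i < M \<Longrightarrow> positive_op (d2 * d1) (T i + complex_of_real e \<cdot>\<^sub>m \<Delta> i)"
  shows "is_tester_with d2 d1 M (\<lambda>i. T i + complex_of_real e \<cdot>\<^sub>m \<Delta> i) (\<rho> + complex_of_real e \<cdot>\<^sub>m \<tau>)"
proof (rule is_tester_withI[OF d2 _ _ pos])
  have \<rho>: "hermitian d1 \<rho>" "mtrace \<rho> = 1"
    using tester_density_hermitian[OF tester] tester_density[OF tester] unfolding density_op_def by blast+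
  have carriers: "\<rho> \<in> carrier_mat d1 d1" "\<tau> \<in> carrier_mat d1 d1"
    using \<rho>(1) \<tau>(1) hermitian_carrier by auto
  show "hermitian d1 (\<rho> + complex_of_real e \<cdot>\<^sub>m \<tau>)" using \<rho>(1) \<tau>(1) by (rule hermitian_add_smult)
  show "mtrace (\<rho> + complex_of_real e \<cdot>\<^sub>m \<tau>) = 1"
    using \<rho>(2) \<tau>(2) by (simp add: mtrace_add_smult[OF carriers])
  fix a b assume a: "a < d2 * d1" and b: "b < d2 * d1"
  have "(\<Sum>i<M. (T i + complex_of_real e \<cdot>\<^sub>m \<Delta> i) $$ (a, b))
      = (\<Sum>i<M. T i $$ (a, b) + complex_of_real e * \<Delta> i $$ (a, b))"
  proof (intro sum.cong refl)
    fix i assume "i \<in> {..<M}"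
    hence "T i \<in> carrier_mat (d2 * d1) (d2 * d1)" "\<Delta> i \<in> carrier_mat (d2 * d1) (d2 * d1)"
      using tester_carrier[OF tester] \<Delta> by auto
    thus "(T i + complex_of_real e \<cdot>\<^sub>m \<Delta> i) $$ (a, b) = T i $$ (a, b) + complex_of_real e * \<Delta> i $$ (a, b)"
      using a b by simp
  qed
  also have "\<dots> = (\<Sum>i<M. T i $$ (a, b)) + complex_of_real e * (\<Sum>i<M. \<Delta> i $$ (a, b))"
    by (simp add: sum.distrib sum_distrib_left)
  also have "\<dots> = kron (1\<^sub>m d2) \<rho> $$ (a, b) + complex_of_real e * kron (1\<^sub>m d2) \<tau> $$ (a, b)"
    by (simp only: tester_sum[OF tester a b] sum[OF a b])
  also have "\<dots> = kron (1\<^sub>m d2) (\<rho> + complex_of_real e \<cdot>\<^sub>m \<tau>) $$ (a, b)"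
    by (rule index_kron_one_add_smult[OF carriers a b, symmetric])
  finally show "(\<Sum>i<M. (T i + complex_of_real e \<cdot>\<^sub>m \<Delta> i) $$ (a, b))
      = kron (1\<^sub>m d2) (\<rho> + complex_of_real e \<cdot>\<^sub>m \<tau>) $$ (a, b)" .
qed

lemma extremal_tester_symmetric_perturbation:
  assumes ext: "extremal_tester d2 d1 M T" and e: "e \<noteq> 0"
    and T: "\<And>i. i < M \<Longrightarrow> T i \<in> carrier_mat (d2 * d1) (d2 * d1)"
    and \<Delta>: "\<And>i. i < M \<Longrightarrow> \<Delta> i \<in> carrier_mat (d2 * d1) (d2 * d1)"
    and plus: "is_tester d2 d1 M (\<lambda>i. T i + complex_of_real e \<cdot>\<^sub>m \<Delta> i)"
    and minus: "is_tester d2 d1 M (\<lambda>i. T i + complex_of_real (- e) \<cdot>\<^sub>m \<Delta> i)"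
  shows "\<forall>i<M. \<Delta> i = 0\<^sub>m (d2 * d1) (d2 * d1)"
proof (intro allI impI)
  fix i assume i: "i < M"
  have halves: "T j = complex_of_real (1 / 2) \<cdot>\<^sub>m (T j + complex_of_real e \<cdot>\<^sub>m \<Delta> j)
      + complex_of_real (1 - 1 / 2) \<cdot>\<^sub>m (T j + complex_of_real (- e) \<cdot>\<^sub>m \<Delta> j)" if "j < M" for j
    using T[OF that] \<Delta>[OF that] by (intro eq_matI) (auto simp: algebra_simps)
  have eq: "T i + complex_of_real e \<cdot>\<^sub>m \<Delta> i = T i + complex_of_real (- e) \<cdot>\<^sub>m \<Delta> i"
    using ext[unfolded extremal_tester_def, THEN conjunct2, rule_format,
        where T'="\<lambda>j. T j + complex_of_real e \<cdot>\<^sub>m \<Delta> j"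
          and T''="\<lambda>j. T j + complex_of_real (- e) \<cdot>\<^sub>m \<Delta> j" and t="1 / 2", OF _ i]
      plus minus halves
    by simp
  show "\<Delta> i = 0\<^sub>m (d2 * d1) (d2 * d1)"
  proof (rule eq_matI)
    fix a b assume "a < dim_row (0\<^sub>m (d2 * d1) (d2 * d1))" "b < dim_col (0\<^sub>m (d2 * d1) (d2 * d1))"
    hence "a < d2 * d1" "b < d2 * d1" by simp_all
    hence "T i $$ (a, b) + complex_of_real e * \<Delta> i $$ (a, b) = T i $$ (a, b) - complex_of_real e * \<Delta> i $$ (a, b)"
      using arg_cong[OF eq, of "\<lambda>A. A $$ (a, b)"] T[OF i] \<Delta>[OF i] by simp
    thus "\<Delta> i $$ (a, b) = 0\<^sub>m (d2 * d1) (d2 * d1) $$ (a, b)"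
      using e \<open>a < d2 * d1\<close> \<open>b < d2 * d1\<close> by simp
  qed (use \<Delta>[OF i] in auto)
qed

definition null_combination ::
  "nat \<Rightarrow> nat \<Rightarrow> nat \<Rightarrow> (nat \<Rightarrow> nat) \<Rightarrow> (nat \<Rightarrow> nat \<Rightarrow> complex vec) \<Rightarrow> nat \<Rightarrow> (nat \<Rightarrow> complex mat)
    \<Rightarrow> (nat \<Rightarrow> complex mat) \<Rightarrow> (nat \<Rightarrow> real) \<Rightarrow> bool" where
  "null_combination d2 d1 M k v L \<sigma> D s \<longleftrightarrow>
     (\<forall>a < d2 * d1. \<forall>b < d2 * d1.
        (\<Sum>i<M. \<Sum>n<k i. \<Sum>m<k i. D i $$ (n, m) * (v i n $ a) * cnj (v i m $ b))
        + (\<Sum>l < L. complex_of_real (s l) * kron (1\<^sub>m d2) (\<sigma> l) $$ (a, b)) = 0)"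

lemma null_combination_iff:
  assumes "\<And>l. l < L \<Longrightarrow> \<sigma> l \<in> carrier_mat d1 d1"
  shows "null_combination d2 d1 M k v L \<sigma> D s \<longleftrightarrow>
    (\<forall>a < d2 * d1. \<forall>b < d2 * d1. (\<Sum>i<M. outer_sum (d2 * d1) (k i) (v i) (D i) $$ (a, b))
       = kron (1\<^sub>m d2) (real_lincomb d1 L (\<lambda>l. - s l) \<sigma>) $$ (a, b))"
  unfolding null_combination_def
  by (simp add: index_outer_sum index_kron_one_real_lincomb[OF assms] sum_negf eq_neg_iff_add_eq_0)

lemma only_trivial_null_combination_if_extremal:
  assumes d2: "0 < d2" and tester: "is_tester_with d2 d1 M T \<rho>"
    and basis: "\<And>i. i < M \<Longrightarrow> support_eigenbasis (d2 * d1) (k i) (v i) (T i)"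
    and \<sigma>_herm: "\<And>l. l < L \<Longrightarrow> hermitian d1 (\<sigma> l)"
    and \<sigma>_traceless: "\<And>l. l < L \<Longrightarrow> mtrace (\<sigma> l) = 0"
    and \<sigma>_indep: "\<And>c. real_lincomb d1 L c \<sigma> = 0\<^sub>m d1 d1 \<Longrightarrow> \<forall>l<L. c l = 0"
    and ext: "extremal_tester d2 d1 M T"
    and D: "\<forall>i<M. hermitian (k i) (D i)" and null: "null_combination d2 d1 M k v L \<sigma> D s"
  shows "(\<forall>i<M. D i = 0\<^sub>m (k i) (k i)) \<and> (\<forall>l<L. s l = 0)"
proof -
  let ?N = "d2 * d1"
  define \<Delta> where "\<Delta> i = outer_sum ?N (k i) (v i) (D i)" for i
  define \<tau> where "\<tau> = real_lincomb d1 L (\<lambda>l. - s l) \<sigma>"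
  have \<sigma>_carrier: "\<And>l. l < L \<Longrightarrow> \<sigma> l \<in> carrier_mat d1 d1" using \<sigma>_herm hermitian_carrier by blast
  have \<Delta>_herm: "hermitian ?N (\<Delta> i)" if "i < M" for i
    unfolding \<Delta>_def using D that by (simp add: hermitian_outer_sum)
  have \<tau>: "hermitian d1 \<tau>" "mtrace \<tau> = 0"
    unfolding \<tau>_def using \<sigma>_herm \<sigma>_carrier \<sigma>_traceless
    by (simp_all add: hermitian_real_lincomb mtrace_real_lincomb)
  have sum: "\<And>a b. a < ?N \<Longrightarrow> b < ?N \<Longrightarrow> (\<Sum>i<M. \<Delta> i $$ (a, b)) = kron (1\<^sub>m d2) \<tau> $$ (a, b)"
    using iffD1[OF null_combination_iff[OF \<sigma>_carrier] null] unfolding \<Delta>_def \<tau>_def by blast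
  have "\<exists>\<epsilon>>0. \<forall>i<M. \<forall>f. \<epsilon> * \<bar>Re (qf ?N (\<Delta> i) f)\<bar> \<le> Re (qf ?N (T i) f)"
    unfolding \<Delta>_def by (intro outer_sums_uniformly_dominated basis)
  then obtain \<epsilon> where "\<epsilon> > 0" and dom: "\<forall>i<M. \<forall>f. \<epsilon> * \<bar>Re (qf ?N (\<Delta> i) f)\<bar> \<le> Re (qf ?N (T i) f)"
    by blast
  have "is_tester_with d2 d1 M (\<lambda>i. T i + complex_of_real e \<cdot>\<^sub>m \<Delta> i) (\<rho> + complex_of_real e \<cdot>\<^sub>m \<tau>)"
    if "\<bar>e\<bar> \<le> \<epsilon>" for e
  proof (rule tester_perturbation[OF d2 tester _ \<tau> sum])
    fix i assume "i < M"
    show "\<Delta> i \<in> carrier_mat ?N ?N" using \<Delta>_herm[OF \<open>i < M\<close>] by (rule hermitian_carrier)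
    show "positive_op ?N (T i + complex_of_real e \<cdot>\<^sub>m \<Delta> i)"
      by (rule positive_add_smult_if_dominated[OF tester_positive[OF tester \<open>i < M\<close>] \<Delta>_herm[OF \<open>i < M\<close>]
            _ that]) (use dom \<open>i < M\<close> in blast)
  qed
  hence tester_e: "is_tester d2 d1 M (\<lambda>i. T i + complex_of_real e \<cdot>\<^sub>m \<Delta> i)" if "\<bar>e\<bar> \<le> \<epsilon>" for e
    unfolding is_tester_def using that by blast
  have plus: "is_tester d2 d1 M (\<lambda>i. T i + complex_of_real \<epsilon> \<cdot>\<^sub>m \<Delta> i)"
    and minus: "is_tester d2 d1 M (\<lambda>i. T i + complex_of_real (- \<epsilon>) \<cdot>\<^sub>m \<Delta> i)"
    using \<open>\<epsilon> > 0\<close> by (intro tester_e; simp)+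
  have \<Delta>0: "\<forall>i<M. \<Delta> i = 0\<^sub>m ?N ?N"
    by (rule extremal_tester_symmetric_perturbation[OF ext _ _ _ plus minus])
       (use \<open>\<epsilon> > 0\<close> tester_carrier[OF tester] \<Delta>_herm hermitian_carrier in auto)
  have "D i = 0\<^sub>m (k i) (k i)" if "i < M" for i
  proof (rule orthonormal_family.outer_sum_eq_0_imp_eq_0[OF support_eigenbasis.axioms(1)[OF basis[OF that]]])
    show "D i \<in> carrier_mat (k i) (k i)" using D that hermitian_carrier by blast
    show "outer_sum ?N (k i) (v i) (D i) = 0\<^sub>m ?N ?N" using \<Delta>0 that unfolding \<Delta>_def by blast
  qed
  moreover have "real_lincomb d1 L (\<lambda>l. - s l) \<sigma> = 0\<^sub>m d1 d1"
    unfolding \<tau>_def[symmetric]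
    by (rule eq_0_if_index_kron_one_eq_0[OF hermitian_carrier[OF \<tau>(1)] d2]) (simp add: sum[symmetric] \<Delta>0)
  hence "\<forall>l<L. s l = 0" using \<sigma>_indep[of "\<lambda>l. - s l"] by simp
  ultimately show ?thesis by blast
qed

lemma mat_eq_if_minus_eq_0:
  fixes A B :: "'a :: group_add mat"
  assumes "A \<in> carrier_mat n m" "B \<in> carrier_mat n m" "A - B = 0\<^sub>m n m"
  shows "A = B"
proof (rule eq_matI)
  fix i j assume "i < dim_row B" "j < dim_col B"
  thus "A $$ (i, j) = B $$ (i, j)" using arg_cong[OF assms(3), of "\<lambda>X. X $$ (i, j)"] assms(1,2) by simp
qed (use assms in auto)

lemma convex_combination_eq_right:
  assumes "A = complex_of_real t \<cdot>\<^sub>m A + complex_of_real (1 - t) \<cdot>\<^sub>m C" "t < 1"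
    "A \<in> carrier_mat n m" "C \<in> carrier_mat n m"
  shows "C = A"
proof (rule eq_matI)
  fix i j assume ij: "i < dim_row A" "j < dim_col A"
  have "complex_of_real (1 - t) * (C $$ (i, j) - A $$ (i, j)) = 0"
    using arg_cong[OF assms(1), of "\<lambda>X. X $$ (i, j)"] ij assms(3,4) by (simp add: algebra_simps)
  thus "C $$ (i, j) = A $$ (i, j)" using assms(2) by simp
qed (use assms in auto)

lemma outer_sum_zero: "outer_sum N k v (0\<^sub>m k k) = 0\<^sub>m N N"
  by (rule eq_matI) (auto simp: outer_sum_def intro!: sum.neutral)

lemma tester_convex_decomposition_kernel:
  assumes T': "is_tester_with d2 d1 M T' \<rho>'" and T'': "is_tester_with d2 d1 M T'' \<rho>''"
    and t: "0 < t" "t < 1" and i: "i < M"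
    and decomp: "T i = complex_of_real t \<cdot>\<^sub>m T' i + complex_of_real (1 - t) \<cdot>\<^sub>m T'' i"
    and g: "\<forall>a<d2 * d1. mv (d2 * d1) (T i) g a = 0"
  shows "\<forall>a<d2 * d1. mv (d2 * d1) (T' i) g a = 0"
  using positive_convex_kernel[OF tester_positive[OF T' i] tester_positive[OF T'' i] t _ g]
    decomp tester_carrier[OF T' i] tester_carrier[OF T'' i] by simp

lemma tester_density_kernel:
  assumes d2: "0 < d2" and tester: "is_tester_with d2 d1 M T \<rho>" and tester': "is_tester_with d2 d1 M T' \<rho>'"
    and kernel: "\<And>i g. i < M \<Longrightarrow> \<forall>a<d2 * d1. mv (d2 * d1) (T i) g a = 0 \<Longrightarrow>
      \<forall>a<d2 * d1. mv (d2 * d1) (T' i) g a = 0"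
    and u: "\<forall>a<d1. mv d1 \<rho> u a = 0"
  shows "\<forall>a<d1. mv d1 \<rho>' u a = 0"
proof -
  let ?N = "d2 * d1" and ?f = "first_block d1 u"
  have carrier: "\<rho> \<in> carrier_mat d1 d1" "\<rho>' \<in> carrier_mat d1 d1"
    using tester_density_hermitian[OF tester] tester_density_hermitian[OF tester'] hermitian_carrier by auto
  have "qf d1 \<rho> u = (\<Sum>i<M. qf ?N (T i) ?f)"
    by (rule qf_eq_sum_first_block[OF d2 carrier(1) tester_sum[OF tester]])
  hence "(\<Sum>i<M. Re (qf ?N (T i) ?f)) = 0"
    using qf_eq_0_if_mv_eq_0[OF u] by (metis Re_sum zero_complex.sel(1))
  hence "Re (qf ?N (T i) ?f) = 0" if "i < M" for i
    using that tester_positive[OF tester] positive_op_iff by (subst (asm) sum_nonneg_eq_0_iff) auto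
  hence "\<forall>a<?N. mv ?N (T' i) ?f a = 0" if "i < M" for i
    using kernel[OF that positive_op_kernel_if_Re_qf_eq_0[OF tester_positive[OF tester that]]] that
    by blast
  hence "qf d1 \<rho>' u = 0"
    using qf_eq_sum_first_block[OF d2 carrier(2) tester_sum[OF tester']] qf_eq_0_if_mv_eq_0 by simp
  thus ?thesis
    using positive_qf_eq_0_imp_mv_eq_0 tester_density[OF tester'] unfolding density_op_def by blast
qed

lemma tester_density_difference:
  assumes d2: "0 < d2" and tester: "is_tester_with d2 d1 M T \<rho>" and tester': "is_tester_with d2 d1 M T' \<rho>'"
    and kernel: "\<And>i g. i < M \<Longrightarrow> \<forall>a<d2 * d1. mv (d2 * d1) (T i) g a = 0 \<Longrightarrow>
      \<forall>a<d2 * d1. mv (d2 * d1) (T' i) g a = 0"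
  shows "hermitian d1 (\<rho>' - \<rho>)" "mtrace (\<rho>' - \<rho>) = 0" "supp (\<rho>' - \<rho>) \<subseteq> supp \<rho>"
proof -
  have herm: "hermitian d1 \<rho>" "hermitian d1 \<rho>'"
    using tester tester_density_hermitian tester' by blast+
  thus "hermitian d1 (\<rho>' - \<rho>)" by (intro hermitian_minus)
  have carrier: "\<rho> \<in> carrier_mat d1 d1" "\<rho>' \<in> carrier_mat d1 d1"
    using herm hermitian_carrier by auto
  show "mtrace (\<rho>' - \<rho>) = 0"
    using tester_density[OF tester] tester_density[OF tester'] carrier
    by (simp add: mtrace_minus density_op_def)
  have "\<forall>a<d1. mv d1 (\<rho>' - \<rho>) u a = 0" if "\<forall>a<d1. mv d1 \<rho> u a = 0" for u
    using tester_density_kernel[OF d2 tester tester' kernel that] that carrier by (simp add: mv_minus_mat)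
  thus "supp (\<rho>' - \<rho>) \<subseteq> supp \<rho>"
    by (intro hermitian_supp_subset[OF herm(1) hermitian_minus[OF herm(2,1)]])
qed

lemma tester_sum_minus:
  assumes "is_tester_with d2 d1 M T \<rho>" "is_tester_with d2 d1 M T' \<rho>'" "a < d2 * d1" "b < d2 * d1"
  shows "(\<Sum>i<M. (T' i - T i) $$ (a, b)) = kron (1\<^sub>m d2) (\<rho>' - \<rho>) $$ (a, b)"
proof -
  have "(\<Sum>i<M. (T' i - T i) $$ (a, b)) = (\<Sum>i<M. T' i $$ (a, b) - T i $$ (a, b))"
  proof (intro sum.cong refl)
    fix i assume "i \<in> {..<M}"
    hence "T i \<in> carrier_mat (d2 * d1) (d2 * d1)" "T' i \<in> carrier_mat (d2 * d1) (d2 * d1)"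
      using tester_carrier[OF assms(1)] tester_carrier[OF assms(2)] by auto
    thus "(T' i - T i) $$ (a, b) = T' i $$ (a, b) - T i $$ (a, b)"
      using assms(3,4) by simp
  qed
  hence "(\<Sum>i<M. (T' i - T i) $$ (a, b)) = (\<Sum>i<M. T' i $$ (a, b)) - (\<Sum>i<M. T i $$ (a, b))"
    by (simp add: sum_subtractf)
  moreover have "\<rho> \<in> carrier_mat d1 d1" "\<rho>' \<in> carrier_mat d1 d1"
    using tester_density_hermitian[OF assms(1)] tester_density_hermitian[OF assms(2)] hermitian_carrier
    by auto
  ultimately show ?thesis
    by (simp add: tester_sum[OF assms(1,3,4)] tester_sum[OF assms(2,3,4)] index_kron_one_minus assms(3,4))
qed

lemma null_combination_tester_difference:
  assumes tester: "is_tester_with d2 d1 M T \<rho>" and T': "is_tester_with d2 d1 M T' \<rho>'"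
    and \<sigma>_carrier: "\<And>l. l < L \<Longrightarrow> \<sigma> l \<in> carrier_mat d1 d1"
    and outer: "\<And>i. i < M \<Longrightarrow> T' i - T i = outer_sum (d2 * d1) (k i) (v i) (D i)"
    and c: "\<rho>' - \<rho> = real_lincomb d1 L c \<sigma>"
  shows "null_combination d2 d1 M k v L \<sigma> D (\<lambda>l. - c l)"
proof (subst null_combination_iff)
  show "\<forall>a<d2 * d1. \<forall>b<d2 * d1. (\<Sum>i<M. outer_sum (d2 * d1) (k i) (v i) (D i) $$ (a, b))
      = kron (1\<^sub>m d2) (real_lincomb d1 L (\<lambda>l. - (- c l)) \<sigma>) $$ (a, b)"
  proof (intro allI impI)
    fix a b assume ab: "a < d2 * d1" "b < d2 * d1"
    have "(\<Sum>i<M. outer_sum (d2 * d1) (k i) (v i) (D i) $$ (a, b)) = (\<Sum>i<M. (T' i - T i) $$ (a, b))"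
      using outer by (intro sum.cong) simp_all
    thus "(\<Sum>i<M. outer_sum (d2 * d1) (k i) (v i) (D i) $$ (a, b))
        = kron (1\<^sub>m d2) (real_lincomb d1 L (\<lambda>l. - (- c l)) \<sigma>) $$ (a, b)"
      using tester_sum_minus[OF tester T' ab] c by simp
  qed
qed (rule \<sigma>_carrier)

lemma extremal_if_only_trivial_null_combination:
  assumes d2: "0 < d2" and tester: "is_tester_with d2 d1 M T \<rho>"
    and basis: "\<And>i. i < M \<Longrightarrow> support_eigenbasis (d2 * d1) (k i) (v i) (T i)"
    and \<sigma>_herm: "\<And>l. l < L \<Longrightarrow> hermitian d1 (\<sigma> l)"
    and \<sigma>_spans: "\<And>X. hermitian d1 X \<Longrightarrow> mtrace X = 0 \<Longrightarrow> supp X \<subseteq> supp \<rho> \<Longrightarrow>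
      \<exists>c. X = real_lincomb d1 L c \<sigma>"
    and trivial: "\<And>D s. \<forall>i<M. hermitian (k i) (D i) \<Longrightarrow> null_combination d2 d1 M k v L \<sigma> D s \<Longrightarrow>
      \<forall>i<M. D i = 0\<^sub>m (k i) (k i)"
  shows "extremal_tester d2 d1 M T"
  unfolding extremal_tester_def
proof (intro conjI allI impI)
  let ?N = "d2 * d1"
  show "is_tester d2 d1 M T" using tester unfolding is_tester_def by blast
  fix T' T'' :: "nat \<Rightarrow> complex mat" and t :: real
  assume "is_tester d2 d1 M T' \<and> is_tester d2 d1 M T'' \<and> 0 < t \<and> t < 1 \<and>
    (\<forall>i<M. T i = complex_of_real t \<cdot>\<^sub>m T' i + complex_of_real (1 - t) \<cdot>\<^sub>m T'' i)"
  then obtain \<rho>' \<rho>'' where T': "is_tester_with d2 d1 M T' \<rho>'" and T'': "is_tester_with d2 d1 M T'' \<rho>''"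
    and t: "0 < t" "t < 1"
    and decomp: "\<And>i. i < M \<Longrightarrow> T i = complex_of_real t \<cdot>\<^sub>m T' i + complex_of_real (1 - t) \<cdot>\<^sub>m T'' i"
    unfolding is_tester_def by blast
  have kernel: "\<forall>a<?N. mv ?N (T' i) g a = 0" if "i < M" "\<forall>a<?N. mv ?N (T i) g a = 0" for i g
    using tester_convex_decomposition_kernel[where T=T and i=i, OF T' T'' t that(1) decomp[OF that(1)] that(2)] .
  define D where "D i = mat (k i) (k i) (\<lambda>(n, m). ip ?N (($) (v i n)) (mv ?N (T' i - T i) (($) (v i m))))"
    for i
  have herm: "hermitian ?N (T' i - T i)" if "i < M" for i
    using tester_positive[OF T' that] tester_positive[OF tester that]
    by (intro hermitian_minus) (simp_all add: positive_op_hermitian)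
  have outer: "T' i - T i = outer_sum ?N (k i) (v i) (D i)" if "i < M" for i
    unfolding D_def
  proof (rule support_eigenbasis.eq_outer_sum_if_kernel_subset[OF basis[OF that] herm[OF that]])
    fix g assume "\<forall>a<?N. mv ?N (T i) g a = 0"
    thus "\<forall>a<?N. mv ?N (T' i - T i) g a = 0"
      using kernel[OF that] tester_carrier[OF T' that] tester_carrier[OF tester that]
      by (simp add: mv_minus_mat)
  qed
  obtain c where c: "\<rho>' - \<rho> = real_lincomb d1 L c \<sigma>"
    using \<sigma>_spans tester_density_difference[OF d2 tester T' kernel] by blast
  have \<sigma>_carrier: "\<And>l. l < L \<Longrightarrow> \<sigma> l \<in> carrier_mat d1 d1" using \<sigma>_herm hermitian_carrier by blast
  have "null_combination d2 d1 M k v L \<sigma> D (\<lambda>l. - c l)"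
    by (rule null_combination_tester_difference[OF tester T' \<sigma>_carrier outer c])
  hence "\<forall>i<M. D i = 0\<^sub>m (k i) (k i)"
    by (rule trivial[rotated]) (simp add: D_def herm hermitian_compression)
  fix i assume i: "i < M"
  have "T' i = T i"
    using outer[OF i] \<open>\<forall>i<M. D i = 0\<^sub>m (k i) (k i)\<close> i
    by (intro mat_eq_if_minus_eq_0[OF tester_carrier[OF T' i] tester_carrier[OF tester i]])
       (simp add: outer_sum_zero)
  moreover have "T i = complex_of_real t \<cdot>\<^sub>m T i + complex_of_real (1 - t) \<cdot>\<^sub>m T'' i"
    using decomp[OF i] unfolding \<open>T' i = T i\<close> .
  hence "T'' i = T i"
    by (rule convex_combination_eq_right[OF _ t(2) tester_carrier[OF tester i] tester_carrier[OF T'' i]])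
  ultimately show "T' i = T'' i" by simp
qed

theorem theorem2:
  fixes d2 d1 M :: nat
    and T :: "nat \<Rightarrow> complex mat" and \<rho> :: "complex mat"
    and k :: "nat \<Rightarrow> nat" and v :: "nat \<Rightarrow> nat \<Rightarrow> complex vec"
    and \<sigma> :: "nat \<Rightarrow> complex mat"
  assumes d2_pos: "0 < d2" and d1_pos: "0 < d1"
    and tester: "is_tester_with d2 d1 M T \<rho>"
    and v_carrier: "\<And>i n. i < M \<Longrightarrow> n < k i \<Longrightarrow> v i n \<in> carrier_vec (d2 * d1)"
    and v_orthonormal: "\<And>i n m. i < M \<Longrightarrow> n < k i \<Longrightarrow> m < k i \<Longrightarrow>
                          cinner (v i n) (v i m) = (if n = m then 1 else 0)"
    and v_eigen: "\<And>i n. i < M \<Longrightarrow> n < k i \<Longrightarrow> \<exists>ev. T i *\<^sub>v v i n = ev \<cdot>\<^sub>v v i n"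
    and v_span: "\<And>i. i < M \<Longrightarrow> cspan (d2 * d1) (k i) (v i) = supp (T i)"
    and \<sigma>_herm: "\<And>l. l < (vec_space.rank d1 \<rho>)\<^sup>2 - 1 \<Longrightarrow> hermitian d1 (\<sigma> l)"
    and \<sigma>_traceless: "\<And>l. l < (vec_space.rank d1 \<rho>)\<^sup>2 - 1 \<Longrightarrow> mtrace (\<sigma> l) = 0"
    and \<sigma>_supp: "\<And>l. l < (vec_space.rank d1 \<rho>)\<^sup>2 - 1 \<Longrightarrow> supp (\<sigma> l) \<subseteq> supp \<rho>"
    and \<sigma>_indep: "\<And>c :: nat \<Rightarrow> real.
          mat d1 d1 (\<lambda>(a, b). \<Sum>l < (vec_space.rank d1 \<rho>)\<^sup>2 - 1. complex_of_real (c l) * \<sigma> l $$ (a, b))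
            = 0\<^sub>m d1 d1
          \<Longrightarrow> \<forall>l < (vec_space.rank d1 \<rho>)\<^sup>2 - 1. c l = 0"
    and \<sigma>_spans: "\<And>X. hermitian d1 X \<Longrightarrow> mtrace X = 0 \<Longrightarrow> supp X \<subseteq> supp \<rho> \<Longrightarrow>
          \<exists>c :: nat \<Rightarrow> real. X =
            mat d1 d1 (\<lambda>(a, b). \<Sum>l < (vec_space.rank d1 \<rho>)\<^sup>2 - 1. complex_of_real (c l) * \<sigma> l $$ (a, b))"
  shows "extremal_tester d2 d1 M T \<longleftrightarrow>
    (\<forall>(D :: nat \<Rightarrow> complex mat) (s :: nat \<Rightarrow> real).
        (\<forall>i<M. hermitian (k i) (D i)) \<and>
        (\<forall>a < d2 * d1. \<forall>b < d2 * d1.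
           (\<Sum>i<M. \<Sum>n<k i. \<Sum>m<k i. D i $$ (n, m) * (v i n $ a) * cnj (v i m $ b))
           + (\<Sum>l < (vec_space.rank d1 \<rho>)\<^sup>2 - 1.
                complex_of_real (s l) * kron (1\<^sub>m d2) (\<sigma> l) $$ (a, b)) = 0)
      \<longrightarrow> (\<forall>i<M. D i = 0\<^sub>m (k i) (k i)) \<and> (\<forall>l < (vec_space.rank d1 \<rho>)\<^sup>2 - 1. s l = 0))"
proof -
  let ?L = "(vec_space.rank d1 \<rho>)\<^sup>2 - 1"
  have basis: "support_eigenbasis (d2 * d1) (k i) (v i) (T i)" if "i < M" for i
    using that v_carrier v_orthonormal tester_positive[OF tester that] v_eigen v_span
    by unfold_locales auto
  have \<sigma>_indep': "\<forall>l<?L. c l = 0" if "real_lincomb d1 ?L c \<sigma> = 0\<^sub>m d1 d1" for c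
    using \<sigma>_indep that unfolding real_lincomb_def by blast
  have \<sigma>_spans': "\<exists>c. X = real_lincomb d1 ?L c \<sigma>" if "hermitian d1 X" "mtrace X = 0" "supp X \<subseteq> supp \<rho>" for X
    using \<sigma>_spans[OF that] unfolding real_lincomb_def .
  show ?thesis
    unfolding null_combination_def[symmetric]
  proof (intro iffI allI impI)
    fix D s
    assume "extremal_tester d2 d1 M T" "(\<forall>i<M. hermitian (k i) (D i)) \<and> null_combination d2 d1 M k v ?L \<sigma> D s"
    thus "(\<forall>i<M. D i = 0\<^sub>m (k i) (k i)) \<and> (\<forall>l<?L. s l = 0)"
      using only_trivial_null_combination_if_extremal[OF d2_pos tester _ _ _ \<sigma>_indep'] basis \<sigma>_herm \<sigma>_traceless
      by blast
  next
    assume "\<forall>D s. (\<forall>i<M. hermitian (k i) (D i)) \<and> null_combination d2 d1 M k v ?L \<sigma> D s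
      \<longrightarrow> (\<forall>i<M. D i = 0\<^sub>m (k i) (k i)) \<and> (\<forall>l<?L. s l = 0)"
    thus "extremal_tester d2 d1 M T"
      using extremal_if_only_trivial_null_combination[OF d2_pos tester _ _ \<sigma>_spans'] basis \<sigma>_herm
      by blast
  qed
qed

end
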